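(* In the setting described in the context, define \[ W=\frac{1}{2\pi i}\sum_{\gamma\in\Gamma_\star}\bar\Omega(\gamma)\int_{\ell_\gamma}\frac{\mathrm{d}t}{t^2}\,\mathcal{X}_\gamma(t) -\frac{1}{2(2\pi i)^2}\sum_{\gamma,\gamma'\in\Gamma_\star}\bar\Omega(\gamma)\bar\Omega(\gamma')\int_{\ell_\gamma}\frac{\mathrm{d}t}{t^2}\int_{\ell_{\gamma'}}\frac{\mathrm{d}t'}{t'^2}\,\langle\gamma,\gamma'\rangle\frac{t\,t'}{t'-t}\,\mathcal{X}_\gamma(t)\mathcal{X}_{\gamma'}(t'). \] Then $W$ satisfies, for all $a,b=1,\dots,m$, the heavenly equation \[ \frac{\partial^2 W}{\partial z^a\partial\theta^b}-\frac{\partial^2 W}{\partial z^b\partial \theta^a} =\frac{1}{(2\pi)^2} \sum_{c,d=1}^{m}\omega^{cd}\, \frac{\partial^2 W}{\partial \theta^a\partial\theta^c}\, \frac{\partial^2 W}{\partial \theta^b\partial\theta^d}, \] and for every $\gamma\in\Gamma$ and $a=1,\dots,m$, \[ \Big[\frac{\partial}{\partial z^a}+\frac{1}{t}\frac{\partial}{\partial\theta^a}-\frac{1}{(2\pi)^2}\sum_{b,c=1}^m\omega^{bc}\frac{\partial^2 W}{\partial\theta^a\partial\theta^b}\frac{\partial}{\partial\theta^c}\Big]\mathcal{X}_\gamma(t)=0 . \]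
   Context: Let $\Gamma$ be a lattice with basis $\gamma^1,\dots,\gamma^m$, equipped with a skew-symmetric integer pairing $\langle\cdot,\cdot\rangle$ such that the matrix $\omega^{ab}=\langle\gamma^a,\gamma^b\rangle$ is invertible. Write $\gamma=\sum_a q_a\gamma^a$ for $\gamma\in\Gamma$ and $\Gamma_\star=\Gamma\setminus\{0\}$. Let $z=(z^a)$ range over an open subset of $\mathbb{C}^m$ and $\theta=(\theta^a)\in\mathbb{C}^m$; put $Z_\gamma=\sum_a q_a z^a$ and $\theta_\gamma=\sum_a q_a\theta^a$. Let $\sigma:\Gamma\to\mathbb{C}^\times$ be a quadratic refinement, i.e. $\sigma_\gamma\sigma_{\gamma'}=(-1)^{\langle\gamma,\gamma'\rangle}\sigma_{\gamma+\gamma'}$. Let $\bar\Omega:\Gamma_\star\to\mathbb{Q}$ be given numbers (rational DT invariants), independent of $(z,\theta)$ locally, with $Z_\gamma\neq0$ whenever $\bar\Omega(\gamma)\neq 0$. For such $\gamma$ let $\ell_\gamma=\{t\in\mathbb{C}^\times: Z_\gamma/t\in i\mathbb{R}_{<0}\}=\{iZ_\gamma/s: s>0\}$ (the BPS ray), oriented from $t=0$ to $t=\infty$. Let $\mathcal{X}^{\rm sf}_\gamma(t)=\sigma_\gamma e^{2\pi i(\theta_\gamma-Z_\gamma/t)}$. Let $\mathcal{X}_\gamma(t)=\mathcal{X}_\gamma(z,\theta,t)$, $\gamma\in\Gamma$, be a solution of the integral (TBA-type) system \[ \mathcal{X}_\gamma(t)=\mathcal{X}^{\rm sf}_\gamma(t)\exp\Big[\frac{1}{2\pi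 i}\sum_{\gamma'\in\Gamma_\star}\bar\Omega(\gamma')\langle\gamma,\gamma'\rangle\int_{\ell_{\gamma'}}\frac{\mathrm{d}t'}{t'}\frac{t}{t'-t}\,\mathcal{X}_{\gamma'}(t')\Big]. \] Standing convergence assumption (made throughout the paper): all sums over charges and integrals appearing converge, and all manipulations (differentiation under sums and integrals, and inversion of the linearized integral equation by its iterated series) are justified. *)

theory Defs
  imports "HOL-Analysis.Analysis"
begin

text \<open>Charges gamma in the lattice Gamma = Z^m are integer vectors int^'m (coordinates q_a
  w.r.t. the basis gamma^1..gamma^m); the index type 'm is an arbitrary finite type, m = CARD('m).
  z, theta are complex vectors complex^'m.  The skew form is given by the integer matrix
  omega a b = <gamma^a, gamma^b>.\<close>

definition pairing :: "('m::finite \<Rightarrow> 'm \<Rightarrow> int) \<Rightarrow> int^'m \<Rightarrow> int^'m \<Rightarrow> int" where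
  "pairing \<omega> g h = (\<Sum>a\<in>UNIV. \<Sum>b\<in>UNIV. g$a * h$b * \<omega> a b)"

definition Zc :: "complex^'m::finite \<Rightarrow> int^'m \<Rightarrow> complex" where
  "Zc z g = (\<Sum>a\<in>UNIV. of_int (g$a) * z$a)"

definition Gstar :: "(int^'m::finite) set" where
  "Gstar = {g. g \<noteq> 0}"

definition onray :: "complex \<Rightarrow> complex \<Rightarrow> bool" where
  "onray Zg t \<longleftrightarrow> (\<exists>s::real. s > 0 \<and> t = \<i> * Zg / of_real s)"

text \<open>Contour integral along l_gamma oriented from 0 to infinity, parametrised by
  t = i Z_gamma u, u in (0,oo), dt = i Z_gamma du (Lebesgue/Bochner integral).\<close>
definition rayint :: "complex \<Rightarrow> (complex \<Rightarrow> complex) \<Rightarrow> complex" where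
  "rayint Zg f = (LINT u:{0<..}|lborel. \<i> * Zg * f (\<i> * Zg * of_real u))"

definition ray_ok :: "complex \<Rightarrow> (complex \<Rightarrow> complex) \<Rightarrow> bool" where
  "ray_ok Zg f \<longleftrightarrow> set_integrable lborel {0<..} (\<lambda>u::real. \<i> * Zg * f (\<i> * Zg * of_real u))"

definition ray_norm :: "complex \<Rightarrow> (complex \<Rightarrow> complex) \<Rightarrow> real" where
  "ray_norm Zg f = (LINT u:{0<..}|lborel. norm (\<i> * Zg * f (\<i> * Zg * of_real u)))"

definition ray2_ok :: "complex \<Rightarrow> complex \<Rightarrow> (complex \<Rightarrow> complex \<Rightarrow> complex) \<Rightarrow> bool" where
  "ray2_ok Zg Zh H \<longleftrightarrow> set_integrable (lborel \<Otimes>\<^sub>M lborel) ({0<..} \<times> {0<..})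
     (\<lambda>(u::real, v::real). (\<i> * Zg) * (\<i> * Zh) * H (\<i> * Zg * of_real u) (\<i> * Zh * of_real v))"

definition ray2_norm :: "complex \<Rightarrow> complex \<Rightarrow> (complex \<Rightarrow> complex \<Rightarrow> complex) \<Rightarrow> real" where
  "ray2_norm Zg Zh H = (LINT p:({0<..} \<times> {0<..})|(lborel \<Otimes>\<^sub>M lborel).
     norm ((\<i> * Zg) * (\<i> * Zh) * H (\<i> * Zg * of_real (fst p)) (\<i> * Zh * of_real (snd p))))"

definition Xsf :: "(int^'m::finite \<Rightarrow> complex) \<Rightarrow> complex^'m \<Rightarrow> complex^'m \<Rightarrow> int^'m \<Rightarrow> complex \<Rightarrow> complex" where
  "Xsf \<sigma> z \<theta> g t = \<sigma> g * exp (2 * pi * \<i> * (Zc \<theta> g - Zc z g / t))"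

definition LinOp :: "('m::finite \<Rightarrow> 'm \<Rightarrow> int) \<Rightarrow> (int^'m \<Rightarrow> rat) \<Rightarrow> complex^'m
    \<Rightarrow> (int^'m \<Rightarrow> complex \<Rightarrow> complex) \<Rightarrow> int^'m \<Rightarrow> complex \<Rightarrow> complex" where
  "LinOp \<omega> \<Omega> z Y g t = (1 / (2 * pi * \<i>)) *
     (\<Sum>\<^sub>\<infinity>h\<in>Gstar. of_rat (\<Omega> h) * of_int (pairing \<omega> g h) *
        rayint (Zc z h) (\<lambda>t'. (1 / t') * (t / (t' - t)) * Y h t'))"

definition adm :: "('m::finite \<Rightarrow> 'm \<Rightarrow> int) \<Rightarrow> (int^'m \<Rightarrow> rat) \<Rightarrow> complex^'m \<Rightarrow> int^'m \<Rightarrow> complex \<Rightarrow> bool" where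
  "adm \<omega> \<Omega> z g t \<longleftrightarrow> t \<noteq> 0 \<and>
     (\<forall>h\<in>Gstar. \<Omega> h \<noteq> 0 \<and> pairing \<omega> g h \<noteq> 0 \<longrightarrow> \<not> onray (Zc z h) t)"

definition Wfun :: "('m::finite \<Rightarrow> 'm \<Rightarrow> int) \<Rightarrow> (int^'m \<Rightarrow> rat)
    \<Rightarrow> (int^'m \<Rightarrow> complex^'m \<Rightarrow> complex^'m \<Rightarrow> complex \<Rightarrow> complex) \<Rightarrow> complex^'m \<Rightarrow> complex^'m \<Rightarrow> complex" where
  "Wfun \<omega> \<Omega> X z \<theta> =
     (1 / (2 * pi * \<i>)) * (\<Sum>\<^sub>\<infinity>g\<in>Gstar. of_rat (\<Omega> g) * rayint (Zc z g) (\<lambda>t. X g z \<theta> t / t^2))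
   - (1 / (2 * (2 * pi * \<i>)^2)) *
     infsum (\<lambda>(g, h). of_rat (\<Omega> g) * of_rat (\<Omega> h) *
        rayint (Zc z g) (\<lambda>t. rayint (Zc z h) (\<lambda>t'.
           (1 / t^2) * (1 / t'^2) * of_int (pairing \<omega> g h) * (t * t' / (t' - t)) * X g z \<theta> t * X h z \<theta> t')))
       (Gstar \<times> Gstar)"

definition vupd :: "'a^'m \<Rightarrow> 'm \<Rightarrow> 'a \<Rightarrow> 'a^'m" where
  "vupd v a w = (\<chi> i. if i = a then w else v$i)"

definition dz :: "'m::finite \<Rightarrow> (complex^'m \<Rightarrow> complex^'m \<Rightarrow> complex) \<Rightarrow> complex^'m \<Rightarrow> complex^'m \<Rightarrow> complex" where
  "dz a F z \<theta> = deriv (\<lambda>w. F (vupd z a w) \<theta>) (z$a)"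

definition dth :: "'m::finite \<Rightarrow> (complex^'m \<Rightarrow> complex^'m \<Rightarrow> complex) \<Rightarrow> complex^'m \<Rightarrow> complex^'m \<Rightarrow> complex" where
  "dth a F z \<theta> = deriv (\<lambda>w. F z (vupd \<theta> a w)) (\<theta>$a)"

definition dzX :: "'m::finite \<Rightarrow> (int^'m \<Rightarrow> complex^'m \<Rightarrow> complex^'m \<Rightarrow> complex \<Rightarrow> complex)
    \<Rightarrow> int^'m \<Rightarrow> complex^'m \<Rightarrow> complex^'m \<Rightarrow> complex \<Rightarrow> complex" where
  "dzX a X g z \<theta> t = dz a (\<lambda>z' \<theta>'. X g z' \<theta>' t) z \<theta>"

definition dthX :: "'m::finite \<Rightarrow> (int^'m \<Rightarrow> complex^'m \<Rightarrow> complex^'m \<Rightarrow> complex \<Rightarrow> complex)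
    \<Rightarrow> int^'m \<Rightarrow> complex^'m \<Rightarrow> complex^'m \<Rightarrow> complex \<Rightarrow> complex" where
  "dthX a X g z \<theta> t = dth a (\<lambda>z' \<theta>'. X g z' \<theta>' t) z \<theta>"

definition Sfun :: "(int^'m::finite \<Rightarrow> rat) \<Rightarrow> complex^'m \<Rightarrow> (int^'m \<Rightarrow> complex \<Rightarrow> complex) \<Rightarrow> complex" where
  "Sfun \<Omega> z F = (\<Sum>\<^sub>\<infinity>g\<in>Gstar. of_rat (\<Omega> g) * rayint (Zc z g) (F g))"

definition Dfun :: "('m::finite \<Rightarrow> 'm \<Rightarrow> int) \<Rightarrow> (int^'m \<Rightarrow> rat) \<Rightarrow> complex^'m
    \<Rightarrow> (int^'m \<Rightarrow> complex \<Rightarrow> complex) \<Rightarrow> (int^'m \<Rightarrow> complex \<Rightarrow> complex) \<Rightarrow> complex" where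
  "Dfun \<omega> \<Omega> z F G = infsum (\<lambda>(g, h). of_rat (\<Omega> g) * of_rat (\<Omega> h) *
        rayint (Zc z g) (\<lambda>t. rayint (Zc z h) (\<lambda>t'.
           (1 / t^2) * (1 / t'^2) * of_int (pairing \<omega> g h) * (t * t' / (t' - t)) * F g t * G h t')))
       (Gstar \<times> Gstar)"

text \<open>Charge weight 1 + sum_a |q_a| (so that sums weighted by charge components converge).\<close>
definition cw :: "int^'m::finite \<Rightarrow> real" where
  "cw g = 1 + (\<Sum>a\<in>UNIV. of_int \<bar>g$a\<bar>)"

definition abs_single :: "(int^'m::finite \<Rightarrow> rat) \<Rightarrow> complex^'m \<Rightarrow> (int^'m \<Rightarrow> complex \<Rightarrow> complex) \<Rightarrow> bool" where
  "abs_single \<Omega> z F \<longleftrightarrow>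
     (\<forall>g\<in>Gstar. \<Omega> g \<noteq> 0 \<longrightarrow> ray_ok (Zc z g) (F g)) \<and>
     (\<lambda>g. cw g * of_rat \<bar>\<Omega> g\<bar> * ray_norm (Zc z g) (F g)) summable_on Gstar"

definition abs_lin :: "('m::finite \<Rightarrow> 'm \<Rightarrow> int) \<Rightarrow> (int^'m \<Rightarrow> rat) \<Rightarrow> complex^'m
    \<Rightarrow> int^'m \<Rightarrow> complex \<Rightarrow> (int^'m \<Rightarrow> complex \<Rightarrow> complex) \<Rightarrow> bool" where
  "abs_lin \<omega> \<Omega> z g t Y \<longleftrightarrow>
     (\<forall>h\<in>Gstar. \<Omega> h \<noteq> 0 \<and> pairing \<omega> g h \<noteq> 0 \<longrightarrow>
        ray_ok (Zc z h) (\<lambda>t'. (1 / t') * (t / (t' - t)) * Y h t')) \<and>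
     (\<lambda>h. of_rat \<bar>\<Omega> h\<bar> * of_int \<bar>pairing \<omega> g h\<bar> *
        ray_norm (Zc z h) (\<lambda>t'. (1 / t') * (t / (t' - t)) * Y h t')) summable_on Gstar"

definition abs_double :: "('m::finite \<Rightarrow> 'm \<Rightarrow> int) \<Rightarrow> (int^'m \<Rightarrow> rat) \<Rightarrow> complex^'m
    \<Rightarrow> (int^'m \<Rightarrow> complex \<Rightarrow> complex) \<Rightarrow> (int^'m \<Rightarrow> complex \<Rightarrow> complex) \<Rightarrow> bool" where
  "abs_double \<omega> \<Omega> z F G \<longleftrightarrow>
     (\<forall>g\<in>Gstar. \<forall>h\<in>Gstar. \<Omega> g \<noteq> 0 \<and> \<Omega> h \<noteq> 0 \<and> pairing \<omega> g h \<noteq> 0 \<longrightarrow>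
        ray2_ok (Zc z g) (Zc z h) (\<lambda>t t'. (1 / t^2) * (1 / t'^2) * (t * t' / (t' - t)) * F g t * G h t')) \<and>
     (\<lambda>(g, h). of_rat \<bar>\<Omega> g\<bar> * of_rat \<bar>\<Omega> h\<bar> * of_int \<bar>pairing \<omega> g h\<bar> *
        ray2_norm (Zc z g) (Zc z h) (\<lambda>t t'. (1 / t^2) * (1 / t'^2) * (t * t' / (t' - t)) * F g t * G h t'))
       summable_on (Gstar \<times> Gstar)"

end

theory Submission
  imports Defs
begin

text \<open>
  The first derivatives of \<open>X\<close> solve the TBA equation linearised at \<open>X\<close>, with the
  inhomogeneities \<open>2\<pi>i q\<^sub>a\<close> (for \<open>\<theta>\<^sup>a\<close>) and \<open>-2\<pi>i q\<^sub>a/t\<close> (for \<open>z\<^sup>a\<close>).  In the first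
  derivatives of \<open>W\<close> the two double integrals are equal (Fubini together with the
  skew-symmetry of \<open>t t'/(t' - t)\<close> and of the pairing), and they cancel the nonlocal part of
  the single integral, leaving \<open>\<partial>W/\<partial>\<theta>\<^sup>a = \<Sum> \<Omega>(\<gamma>) q\<^sub>a \<integral> X\<^sub>\<gamma> dt/t\<^sup>2\<close> and
  \<open>\<partial>W/\<partial>z\<^sup>a = - \<Sum> \<Omega>(\<gamma>) q\<^sub>a \<integral> X\<^sub>\<gamma> dt/t\<^sup>3\<close>.  The left-hand side of the Lax equation
  then solves the homogeneous linearised equation, so it vanishes because that equation has
  only the trivial solution.  Differentiating \<open>\<partial>W/\<partial>\<theta>\<^sup>b\<close> in \<open>z\<^sup>a\<close> and eliminating
  \<open>\<partial>X/\<partial>z\<^sup>a\<close> with the Lax equation gives the heavenly equation.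
\<close>

section \<open>Integrals along BPS rays\<close>

definition ray_integrand :: "complex \<Rightarrow> (complex \<Rightarrow> complex) \<Rightarrow> real \<Rightarrow> complex" where
  "ray_integrand Z f u = indicator {0<..} u *\<^sub>R (\<i> * Z * f (\<i> * Z * of_real u))"

lemma rayint_eq_integral: "rayint Z f = integral\<^sup>L lborel (ray_integrand Z f)"
  unfolding rayint_def set_lebesgue_integral_def ray_integrand_def[abs_def] ..

lemma ray_ok_iff_integrable: "ray_ok Z f \<longleftrightarrow> integrable lborel (ray_integrand Z f)"
  unfolding ray_ok_def set_integrable_def ray_integrand_def[abs_def] ..

lemma ray_norm_eq_integral: "ray_norm Z f = integral\<^sup>L lborel (\<lambda>u. norm (ray_integrand Z f u))"
  unfolding ray_norm_def set_lebesgue_integral_def ray_integrand_def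
  by (rule arg_cong[where f="integral\<^sup>L lborel"]) (auto simp: indicator_def)

lemma ray_norm_nonneg: "ray_norm Z f \<ge> 0"
  unfolding ray_norm_eq_integral by (rule Bochner_Integration.integral_nonneg) auto

lemma norm_rayint_le: "norm (rayint Z f) \<le> ray_norm Z f"
  unfolding rayint_eq_integral ray_norm_eq_integral by (rule integral_norm_bound)

lemma ray_integrand_add: "ray_integrand Z (\<lambda>t. f t + g t) = (\<lambda>u. ray_integrand Z f u + ray_integrand Z g u)"
  by (auto simp: ray_integrand_def fun_eq_iff algebra_simps)

lemma ray_integrand_cmult: "ray_integrand Z (\<lambda>t. c * f t) = (\<lambda>u. c * ray_integrand Z f u)"
  by (auto simp: ray_integrand_def fun_eq_iff algebra_simps)

lemma ray_ok_add: "ray_ok Z f \<Longrightarrow> ray_ok Z g \<Longrightarrow> ray_ok Z (\<lambda>t. f t + g t)"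
  unfolding ray_ok_iff_integrable ray_integrand_add by (rule Bochner_Integration.integrable_add)

lemma rayint_add: "ray_ok Z f \<Longrightarrow> ray_ok Z g \<Longrightarrow> rayint Z (\<lambda>t. f t + g t) = rayint Z f + rayint Z g"
  unfolding ray_ok_iff_integrable rayint_eq_integral ray_integrand_add by (rule Bochner_Integration.integral_add)

lemma ray_norm_add_le:
  assumes "ray_ok Z f" "ray_ok Z g"
  shows "ray_norm Z (\<lambda>t. f t + g t) \<le> ray_norm Z f + ray_norm Z g"
proof -
  note int = assms[unfolded ray_ok_iff_integrable]
  have "ray_norm Z (\<lambda>t. f t + g t)
      \<le> (LINT u|lborel. norm (ray_integrand Z f u) + norm (ray_integrand Z g u))"
    unfolding ray_norm_eq_integral ray_integrand_add using int
    by (intro Bochner_Integration.integral_mono) (auto intro: norm_triangle_ineq)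
  also have "\<dots> = ray_norm Z f + ray_norm Z g"
    unfolding ray_norm_eq_integral using int by (intro Bochner_Integration.integral_add) auto
  finally show ?thesis .
qed

lemma ray_ok_cmult: "ray_ok Z f \<Longrightarrow> ray_ok Z (\<lambda>t. c * f t)"
  unfolding ray_ok_iff_integrable ray_integrand_cmult by (rule integrable_mult_right)

lemma rayint_cmult: "rayint Z (\<lambda>t. c * f t) = c * rayint Z f"
  unfolding rayint_eq_integral ray_integrand_cmult by (rule integral_mult_right_zero)

lemma ray_norm_cmult: "ray_norm Z (\<lambda>t. c * f t) = norm c * ray_norm Z f"
  unfolding ray_norm_eq_integral ray_integrand_cmult by (simp add: norm_mult)

lemma ray_ok_zero: "ray_ok Z (\<lambda>t. 0)" and rayint_zero: "rayint Z (\<lambda>t. 0) = 0"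
  and ray_norm_zero: "ray_norm Z (\<lambda>t. 0) = 0"
  unfolding ray_ok_iff_integrable rayint_eq_integral ray_norm_eq_integral by (simp_all add: ray_integrand_def[abs_def])

lemma ray_cong:
  assumes "\<And>u. u > 0 \<Longrightarrow> f (\<i> * Z * of_real u) = g (\<i> * Z * of_real u)"
  shows "rayint Z f = rayint Z g" "ray_ok Z f = ray_ok Z g" "ray_norm Z f = ray_norm Z g"
proof -
  have "ray_integrand Z f = ray_integrand Z g"
    using assms by (auto simp: ray_integrand_def indicator_def fun_eq_iff)
  then show "rayint Z f = rayint Z g" "ray_ok Z f = ray_ok Z g" "ray_norm Z f = ray_norm Z g"
    unfolding rayint_eq_integral ray_ok_iff_integrable ray_norm_eq_integral by simp_all
qed

lemma onray_ray_point: "u > 0 \<Longrightarrow> onray Z (\<i> * Z * of_real u)"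
  unfolding onray_def by (intro exI[of _ "1/u"]) (simp add: field_simps)

lemma norm_of_rat_complex: "norm (of_rat q :: complex) = of_rat \<bar>q\<bar>"
proof -
  have "(of_rat q :: complex) = of_real (of_rat q)"
    by (cases q) (simp add: of_rat_rat)
  then show ?thesis by (simp add: abs_if of_rat_minus)
qed

section \<open>Weighted sums over charges\<close>

definition ray_summable :: "complex^'m::finite \<Rightarrow> (int^'m \<Rightarrow> complex) \<Rightarrow> (int^'m \<Rightarrow> complex \<Rightarrow> complex) \<Rightarrow> bool" where
  "ray_summable z w F \<longleftrightarrow> (\<forall>h\<in>Gstar. w h \<noteq> 0 \<longrightarrow> ray_ok (Zc z h) (F h)) \<and>
     (\<lambda>h. norm (w h) * ray_norm (Zc z h) (F h)) summable_on Gstar"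

definition ray_sum :: "complex^'m::finite \<Rightarrow> (int^'m \<Rightarrow> complex) \<Rightarrow> (int^'m \<Rightarrow> complex \<Rightarrow> complex) \<Rightarrow> complex" where
  "ray_sum z w F = (\<Sum>\<^sub>\<infinity>h\<in>Gstar. w h * rayint (Zc z h) (F h))"

lemma Sfun_eq_ray_sum: "Sfun \<Omega> z F = ray_sum z (\<lambda>g. of_rat (\<Omega> g)) F"
  unfolding Sfun_def ray_sum_def ..

lemma ray_sum_summable:
  fixes z :: "complex^'m::finite"
  assumes "ray_summable z w F"
  shows "(\<lambda>h. w h * rayint (Zc z h) (F h)) summable_on Gstar"
proof -
  have "(\<lambda>h. norm (w h) * ray_norm (Zc z h) (F h)) summable_on Gstar"
    using assms unfolding ray_summable_def by blast
  then have "Infinite_Sum.abs_summable_on (\<lambda>h. w h * rayint (Zc z h) (F h)) Gstar"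
    by (rule Infinite_Sum.abs_summable_on_comparison_test')
       (simp add: norm_mult mult_left_mono norm_rayint_le)
  then show ?thesis by (rule abs_summable_summable)
qed

lemma ray_summable_add:
  fixes z :: "complex^'m::finite"
  assumes F: "ray_summable z w F" and G: "ray_summable z w G"
  shows "ray_summable z w (\<lambda>h t. F h t + G h t)"
  unfolding ray_summable_def
proof (intro conjI ballI impI)
  fix h :: "int^'m" assume "h \<in> Gstar" "w h \<noteq> 0"
  then show "ray_ok (Zc z h) (\<lambda>t. F h t + G h t)"
    using F G ray_ok_add unfolding ray_summable_def by blast
next
  show "(\<lambda>h. norm (w h) * ray_norm (Zc z h) (\<lambda>t. F h t + G h t)) summable_on Gstar"
  proof (rule summable_on_comparison_test)
    show "(\<lambda>h. norm (w h) * ray_norm (Zc z h) (F h) + norm (w h) * ray_norm (Zc z h) (G h))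
        summable_on Gstar"
      using F G unfolding ray_summable_def by (intro summable_on_add) auto
  next
    fix h :: "int^'m" assume h: "h \<in> Gstar"
    show "0 \<le> norm (w h) * ray_norm (Zc z h) (\<lambda>t. F h t + G h t)"
      by (simp add: ray_norm_nonneg)
    show "norm (w h) * ray_norm (Zc z h) (\<lambda>t. F h t + G h t)
        \<le> norm (w h) * ray_norm (Zc z h) (F h) + norm (w h) * ray_norm (Zc z h) (G h)"
    proof (cases "w h = 0")
      case False
      then have "ray_norm (Zc z h) (\<lambda>t. F h t + G h t) \<le> ray_norm (Zc z h) (F h) + ray_norm (Zc z h) (G h)"
        using F G h ray_norm_add_le unfolding ray_summable_def by blast
      then show ?thesis by (simp add: distrib_left[symmetric] mult_left_mono)
    qed simp
  qed
qed

lemma ray_sum_add: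
  fixes z :: "complex^'m::finite"
  assumes F: "ray_summable z w F" and G: "ray_summable z w G"
  shows "ray_sum z w (\<lambda>h t. F h t + G h t) = ray_sum z w F + ray_sum z w G"
proof -
  have "ray_sum z w (\<lambda>h t. F h t + G h t)
      = (\<Sum>\<^sub>\<infinity>h\<in>Gstar. w h * rayint (Zc z h) (F h) + w h * rayint (Zc z h) (G h))"
    unfolding ray_sum_def
  proof (rule infsum_cong)
    fix h :: "int^'m" assume "h \<in> Gstar"
    then show "w h * rayint (Zc z h) (\<lambda>t. F h t + G h t)
        = w h * rayint (Zc z h) (F h) + w h * rayint (Zc z h) (G h)"
      using F G rayint_add[of "Zc z h" "F h" "G h"] unfolding ray_summable_def
      by (cases "w h = 0") (simp_all add: distrib_left)
  qed
  also have "\<dots> = ray_sum z w F + ray_sum z w G"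
    unfolding ray_sum_def using F G by (intro infsum_add ray_sum_summable)
  finally show ?thesis .
qed

lemma ray_summable_cmult:
  assumes "ray_summable z w F"
  shows "ray_summable z w (\<lambda>h t. c * F h t)"
proof -
  have "(\<lambda>h. norm c * (norm (w h) * ray_norm (Zc z h) (F h))) summable_on Gstar"
    using assms unfolding ray_summable_def by (intro summable_on_cmult_right) simp
  then show ?thesis
    using assms unfolding ray_summable_def ray_norm_cmult
    by (simp add: ray_ok_cmult mult.left_commute[of "norm c"])
qed

lemma ray_sum_cmult: "ray_sum z w (\<lambda>h t. c * F h t) = c * ray_sum z w F"
proof -
  have "\<And>h. w h * (c * rayint (Zc z h) (F h)) = c * (w h * rayint (Zc z h) (F h))" by simp
  then show ?thesis unfolding ray_sum_def rayint_cmult by (simp only: infsum_cmult_right')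
qed

lemma ray_summable_sum:
  fixes z :: "complex^'m::finite"
  assumes "finite I" "\<And>i. i \<in> I \<Longrightarrow> ray_summable z w (F i)"
  shows "ray_summable z w (\<lambda>h t. \<Sum>i\<in>I. F i h t)"
  using assms
proof (induction I rule: finite_induct)
  case empty
  show ?case by (simp add: ray_summable_def ray_ok_zero ray_norm_zero)
next
  case (insert i I)
  then show ?case by (simp add: ray_summable_add)
qed

lemma ray_sum_sum:
  fixes z :: "complex^'m::finite"
  assumes "finite I" "\<And>i. i \<in> I \<Longrightarrow> ray_summable z w (F i)"
  shows "ray_sum z w (\<lambda>h t. \<Sum>i\<in>I. F i h t) = (\<Sum>i\<in>I. ray_sum z w (F i))"
  using assms
proof (induction I rule: finite_induct)
  case empty
  show ?case by (simp add: ray_sum_def rayint_zero)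
next
  case (insert i I)
  then show ?case by (simp add: ray_sum_add ray_summable_sum)
qed

lemma ray_sum_cong:
  fixes z :: "complex^'m::finite"
  assumes "\<And>h u. h \<in> Gstar \<Longrightarrow> w h \<noteq> 0 \<Longrightarrow> u > 0 \<Longrightarrow>
     F h (\<i> * Zc z h * of_real u) = G h (\<i> * Zc z h * of_real u)"
  shows "ray_sum z w F = ray_sum z w G"
  unfolding ray_sum_def
proof (rule infsum_cong)
  fix h :: "int^'m" assume "h \<in> Gstar"
  then show "w h * rayint (Zc z h) (F h) = w h * rayint (Zc z h) (G h)"
    using ray_cong(1)[where Z="Zc z h" and f="F h" and g="G h"] assms by (cases "w h = 0") auto
qed

lemma ray_summable_weight_into_integrand:
  fixes z :: "complex^'m::finite"
  assumes "ray_summable z (\<lambda>h. w h * a h) F"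
  shows "ray_summable z w (\<lambda>h t. a h * F h t)"
  unfolding ray_summable_def ray_norm_cmult
proof (intro conjI ballI impI)
  fix h :: "int^'m" assume "h \<in> Gstar" "w h \<noteq> 0"
  then show "ray_ok (Zc z h) (\<lambda>t. a h * F h t)"
    using assms ray_ok_zero ray_ok_cmult unfolding ray_summable_def by (cases "a h = 0") auto
next
  show "(\<lambda>h. norm (w h) * (norm (a h) * ray_norm (Zc z h) (F h))) summable_on Gstar"
    using assms unfolding ray_summable_def by (simp add: norm_mult mult.assoc)
qed

lemma ray_sum_weight_into_integrand:
  "ray_sum z w (\<lambda>h t. a h * F h t) = ray_sum z (\<lambda>h. w h * a h) F"
  unfolding ray_sum_def rayint_cmult by (simp add: mult.assoc)

lemma ray_summable_weight_add:
  fixes z :: "complex^'m::finite"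
  assumes "ray_summable z w1 F" "ray_summable z w2 F"
  shows "ray_summable z (\<lambda>h. w1 h + w2 h) F"
  unfolding ray_summable_def
proof (intro conjI ballI impI)
  fix h :: "int^'m" assume "h \<in> Gstar" "w1 h + w2 h \<noteq> 0"
  then show "ray_ok (Zc z h) (F h)" using assms unfolding ray_summable_def by force
next
  show "(\<lambda>h. norm (w1 h + w2 h) * ray_norm (Zc z h) (F h)) summable_on Gstar"
  proof (rule summable_on_comparison_test)
    show "(\<lambda>h. norm (w1 h) * ray_norm (Zc z h) (F h) + norm (w2 h) * ray_norm (Zc z h) (F h))
        summable_on Gstar"
      using assms unfolding ray_summable_def by (intro summable_on_add) auto
  qed (auto simp: ray_norm_nonneg distrib_right[symmetric] mult_right_mono norm_triangle_ineq)
qed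

lemma ray_sum_weight_add:
  fixes z :: "complex^'m::finite"
  assumes "ray_summable z w1 F" "ray_summable z w2 F"
  shows "ray_sum z (\<lambda>h. w1 h + w2 h) F = ray_sum z w1 F + ray_sum z w2 F"
  unfolding ray_sum_def distrib_right using assms by (intro infsum_add ray_sum_summable)

lemma ray_summable_weight_cmult: "ray_summable z w F \<Longrightarrow> ray_summable z (\<lambda>h. c * w h) F"
  unfolding ray_summable_def by (simp add: norm_mult mult.assoc summable_on_cmult_right)

lemma ray_sum_weight_cmult: "ray_sum z (\<lambda>h. c * w h) F = c * ray_sum z w F"
  unfolding ray_sum_def by (simp add: mult.assoc infsum_cmult_right')

lemma ray_summable_weight_sum:
  fixes z :: "complex^'m::finite"
  assumes "finite I" "\<And>i. i \<in> I \<Longrightarrow> ray_summable z (w i) F"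
  shows "ray_summable z (\<lambda>h. \<Sum>i\<in>I. w i h) F"
  using assms
proof (induction I rule: finite_induct)
  case empty
  show ?case by (simp add: ray_summable_def)
next
  case (insert i I)
  then show ?case by (simp add: ray_summable_weight_add)
qed

lemma ray_sum_weight_sum:
  fixes z :: "complex^'m::finite"
  assumes "finite I" "\<And>i. i \<in> I \<Longrightarrow> ray_summable z (w i) F"
  shows "ray_sum z (\<lambda>h. \<Sum>i\<in>I. w i h) F = (\<Sum>i\<in>I. ray_sum z (w i) F)"
  using assms
proof (induction I rule: finite_induct)
  case empty
  show ?case by (simp add: ray_sum_def)
next
  case (insert i I)
  then show ?case by (simp add: ray_sum_weight_add ray_summable_weight_sum)
qed

lemma cw_ge_1: "cw g \<ge> 1"
  unfolding cw_def by (simp add: sum_nonneg)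

lemma abs_component_le_cw: "\<bar>of_int (g$a)\<bar> \<le> cw g"
proof -
  have "of_int \<bar>g$a\<bar> \<le> (\<Sum>b\<in>UNIV. of_int \<bar>g$b\<bar> :: real)"
    by (rule member_le_sum) auto
  then show ?thesis unfolding cw_def by simp
qed

lemma ray_summable_of_abs_single:
  fixes z :: "complex^'m::finite"
  assumes F: "abs_single \<Omega> z F"
    and w: "\<And>h. h \<in> Gstar \<Longrightarrow> norm (w h) \<le> C * (cw h * of_rat \<bar>\<Omega> h\<bar>)"
  shows "ray_summable z w F"
  unfolding ray_summable_def
proof (intro conjI ballI impI)
  fix h :: "int^'m" assume h: "h \<in> Gstar" "w h \<noteq> 0"
  then have "\<Omega> h \<noteq> 0" using w[OF h(1)] by auto
  then show "ray_ok (Zc z h) (F h)" using F h unfolding abs_single_def by auto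
next
  show "(\<lambda>h. norm (w h) * ray_norm (Zc z h) (F h)) summable_on Gstar"
  proof (rule summable_on_comparison_test)
    show "(\<lambda>h. C * (cw h * of_rat \<bar>\<Omega> h\<bar> * ray_norm (Zc z h) (F h))) summable_on Gstar"
      using F unfolding abs_single_def by (intro summable_on_cmult_right) auto
  next
    fix h :: "int^'m" assume "h \<in> Gstar"
    then show "norm (w h) * ray_norm (Zc z h) (F h) \<le> C * (cw h * of_rat \<bar>\<Omega> h\<bar> * ray_norm (Zc z h) (F h))"
      using mult_right_mono[OF w ray_norm_nonneg] by (simp add: mult.assoc)
  qed (simp add: ray_norm_nonneg)
qed

lemma ray_summable_Omega:
  fixes z :: "complex^'m::finite"
  assumes "abs_single \<Omega> z F"
  shows "ray_summable z (\<lambda>g. of_rat (\<Omega> g)) F"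
proof (rule ray_summable_of_abs_single[OF assms, where C=1])
  fix h :: "int^'m"
  show "norm (of_rat (\<Omega> h) :: complex) \<le> 1 * (cw h * of_rat \<bar>\<Omega> h\<bar>)"
    using mult_right_mono[OF cw_ge_1, of "of_rat \<bar>\<Omega> h\<bar>" h] by (simp add: norm_of_rat_complex)
qed

lemma ray_summable_Omega_charge:
  fixes z :: "complex^'m::finite"
  assumes "abs_single \<Omega> z F"
  shows "ray_summable z (\<lambda>g. of_rat (\<Omega> g) * of_int (g$d)) F"
proof (rule ray_summable_of_abs_single[OF assms, where C=1])
  fix h :: "int^'m"
  have "of_rat \<bar>\<Omega> h\<bar> * \<bar>of_int (h$d)\<bar> \<le> of_rat \<bar>\<Omega> h\<bar> * cw h"
    by (intro mult_left_mono abs_component_le_cw) simp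
  then show "norm (of_rat (\<Omega> h) * of_int (h$d) :: complex) \<le> 1 * (cw h * of_rat \<bar>\<Omega> h\<bar>)"
    by (simp add: norm_mult norm_of_rat_complex mult.commute)
qed

lemma ray_summable_Omega_charge_integrand:
  fixes z :: "complex^'m::finite"
  assumes "abs_single \<Omega> z F"
  shows "ray_summable z (\<lambda>g. of_rat (\<Omega> g)) (\<lambda>g t. of_int (g$d) * F g t)"
  by (rule ray_summable_weight_into_integrand[OF ray_summable_Omega_charge[OF assms]])

lemma LinOp_eq_ray_sum:
  "LinOp \<omega> \<Omega> z Y g t = (1 / (2 * pi * \<i>)) *
     ray_sum z (\<lambda>h. of_rat (\<Omega> h) * of_int (pairing \<omega> g h)) (\<lambda>h t'. (1 / t') * (t / (t' - t)) * Y h t')"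
  unfolding LinOp_def ray_sum_def ..

lemma abs_lin_iff_ray_summable:
  "abs_lin \<omega> \<Omega> z g t Y \<longleftrightarrow>
     ray_summable z (\<lambda>h. of_rat (\<Omega> h) * of_int (pairing \<omega> g h)) (\<lambda>h t'. (1 / t') * (t / (t' - t)) * Y h t')"
  unfolding abs_lin_def ray_summable_def by (simp add: norm_mult norm_of_rat_complex)

lemma abs_lin_add:
  "abs_lin \<omega> \<Omega> z g t Y \<Longrightarrow> abs_lin \<omega> \<Omega> z g t Y' \<Longrightarrow> abs_lin \<omega> \<Omega> z g t (\<lambda>h s. Y h s + Y' h s)"
  unfolding abs_lin_iff_ray_summable by (drule (1) ray_summable_add) (simp add: distrib_left)

lemma LinOp_add:
  assumes "abs_lin \<omega> \<Omega> z g t Y" "abs_lin \<omega> \<Omega> z g t Y'"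
  shows "LinOp \<omega> \<Omega> z (\<lambda>h s. Y h s + Y' h s) g t = LinOp \<omega> \<Omega> z Y g t + LinOp \<omega> \<Omega> z Y' g t"
  using ray_sum_add[OF assms[unfolded abs_lin_iff_ray_summable]]
  unfolding LinOp_eq_ray_sum by (simp add: distrib_left)

lemma abs_lin_cmult: "abs_lin \<omega> \<Omega> z g t Y \<Longrightarrow> abs_lin \<omega> \<Omega> z g t (\<lambda>h s. c * Y h s)"
  unfolding abs_lin_iff_ray_summable by (drule ray_summable_cmult[where c=c]) (simp add: mult_ac)

lemma LinOp_cmult: "LinOp \<omega> \<Omega> z (\<lambda>h s. c * Y h s) g t = c * LinOp \<omega> \<Omega> z Y g t"
proof -
  have "(\<lambda>h s. (1 / s) * (t / (s - t)) * (c * Y h s)) = (\<lambda>h s. c * ((1 / s) * (t / (s - t)) * Y h s))"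
    by (simp only: mult.left_commute[of c])
  then have "ray_sum z w (\<lambda>h s. (1 / s) * (t / (s - t)) * (c * Y h s))
      = c * ray_sum z w (\<lambda>h s. (1 / s) * (t / (s - t)) * Y h s)" for w
    by (simp only: ray_sum_cmult)
  then show ?thesis unfolding LinOp_eq_ray_sum by (simp only: mult.left_commute)
qed

lemma abs_lin_sum:
  assumes "finite I" "\<And>i. i \<in> I \<Longrightarrow> abs_lin \<omega> \<Omega> z g t (Y i)"
  shows "abs_lin \<omega> \<Omega> z g t (\<lambda>h s. \<Sum>i\<in>I. Y i h s)"
  using ray_summable_sum[OF assms(1) assms(2)[unfolded abs_lin_iff_ray_summable]]
  unfolding abs_lin_iff_ray_summable by (simp add: sum_distrib_left)

lemma LinOp_sum:
  assumes "finite I" "\<And>i. i \<in> I \<Longrightarrow> abs_lin \<omega> \<Omega> z g t (Y i)"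
  shows "LinOp \<omega> \<Omega> z (\<lambda>h s. \<Sum>i\<in>I. Y i h s) g t = (\<Sum>i\<in>I. LinOp \<omega> \<Omega> z (Y i) g t)"
  using ray_sum_sum[OF assms(1) assms(2)[unfolded abs_lin_iff_ray_summable]]
  unfolding LinOp_eq_ray_sum by (simp add: sum_distrib_left)

lemma pairing_as_sum:
  "(of_int (pairing \<omega> g h) :: complex) =
     (\<Sum>c\<in>UNIV. \<Sum>d\<in>UNIV. of_int (g$c) * of_int (\<omega> c d) * of_int (h$d))"
  unfolding pairing_def by (simp add: mult_ac)

lemma pairing_skew:
  assumes "\<forall>a b. \<omega> a b = - \<omega> b a"
  shows "pairing \<omega> h g = - pairing \<omega> g h"
proof -
  have "pairing \<omega> h g = (\<Sum>b\<in>UNIV. \<Sum>a\<in>UNIV. h$a * g$b * \<omega> a b)"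
    unfolding pairing_def by (rule sum.swap)
  also have "\<dots> = (\<Sum>b\<in>UNIV. \<Sum>a\<in>UNIV. - (g$b * h$a * \<omega> b a))"
    using assms by (intro sum.cong refl) (metis minus_mult_right mult.commute)
  also have "\<dots> = - pairing \<omega> g h" unfolding pairing_def by (simp add: sum_negf)
  finally show ?thesis .
qed

lemma
  fixes z :: "complex^'m::finite"
  assumes F: "abs_single \<Omega> z F"
  shows ray_summable_pairing_weight: "ray_summable z (\<lambda>h. of_rat (\<Omega> h) * of_int (pairing \<omega> g h)) F"
    and ray_sum_pairing_weight: "ray_sum z (\<lambda>h. of_rat (\<Omega> h) * of_int (pairing \<omega> g h)) F =
      (\<Sum>c\<in>UNIV. \<Sum>d\<in>UNIV. of_int (g$c) * of_int (\<omega> c d) * Sfun \<Omega> z (\<lambda>h t. of_int (h$d) * F h t))"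
proof -
  define v where "v d h = (of_rat (\<Omega> h) * of_int (h$d) :: complex)" for d h
  have v: "ray_summable z (v d) F" for d
    unfolding v_def by (rule ray_summable_Omega_charge[OF F])
  have split: "(\<lambda>h. of_rat (\<Omega> h) * of_int (pairing \<omega> g h)) =
      (\<lambda>h. \<Sum>c\<in>UNIV. \<Sum>d\<in>UNIV. of_int (g$c) * of_int (\<omega> c d) * v d h)"
    unfolding v_def pairing_as_sum by (auto simp: fun_eq_iff sum_distrib_left mult_ac)
  have inner: "ray_summable z (\<lambda>h. \<Sum>d\<in>UNIV. of_int (g$c) * of_int (\<omega> c d) * v d h) F" for c
    by (intro ray_summable_weight_sum ray_summable_weight_cmult v) simp
  show "ray_summable z (\<lambda>h. of_rat (\<Omega> h) * of_int (pairing \<omega> g h)) F"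
    unfolding split by (intro ray_summable_weight_sum inner) simp
  have "ray_sum z (\<lambda>h. of_rat (\<Omega> h) * of_int (pairing \<omega> g h)) F
      = (\<Sum>c\<in>UNIV. \<Sum>d\<in>UNIV. ray_sum z (\<lambda>h. of_int (g$c) * of_int (\<omega> c d) * v d h) F)"
    unfolding split by (simp add: ray_sum_weight_sum inner ray_summable_weight_cmult v)
  also have "\<dots> = (\<Sum>c\<in>UNIV. \<Sum>d\<in>UNIV. of_int (g$c) * of_int (\<omega> c d) * Sfun \<Omega> z (\<lambda>h t. of_int (h$d) * F h t))"
    by (simp only: ray_sum_weight_cmult v_def Sfun_eq_ray_sum ray_sum_weight_into_integrand)
  finally show "ray_sum z (\<lambda>h. of_rat (\<Omega> h) * of_int (pairing \<omega> g h)) F = \<dots>" .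
qed

text \<open>Behind this is the partial fraction
  \<open>(1/t) (1/t') t/(t' - t) = (1/t') t/(t' - t) (1/t') + 1/t'\<^sup>2\<close>;
  the last term no longer depends on \<open>t\<close>.\<close>
lemma LinOp_partial_fraction:
  fixes z :: "complex^'m::finite"
  assumes Z_nz: "\<forall>h\<in>Gstar. \<Omega> h \<noteq> 0 \<longrightarrow> Zc z h \<noteq> 0"
    and adm: "adm \<omega> \<Omega> z g t"
    and lin: "abs_lin \<omega> \<Omega> z g t (\<lambda>h t'. D h t' / t')"
    and single: "abs_single \<Omega> z (\<lambda>h t'. D h t' / t'^2)"
  shows "(1 / t) * LinOp \<omega> \<Omega> z D g t = LinOp \<omega> \<Omega> z (\<lambda>h t'. D h t' / t') g t +
    (1 / (2 * pi * \<i>)) * (\<Sum>c\<in>UNIV. \<Sum>d\<in>UNIV. of_int (g$c) * of_int (\<omega> c d) *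
        Sfun \<Omega> z (\<lambda>h t'. of_int (h$d) * D h t' / t'^2))"
proof -
  define w where "w h = (of_rat (\<Omega> h) * of_int (pairing \<omega> g h) :: complex)" for h
  have t0: "t \<noteq> 0" using adm unfolding adm_def by blast
  have wL: "ray_summable z w (\<lambda>h t'. (1 / t') * (t / (t' - t)) * (D h t' / t'))"
    using lin unfolding abs_lin_iff_ray_summable w_def .
  have "(1 / t) * LinOp \<omega> \<Omega> z D g t
      = (1 / (2 * pi * \<i>)) * ray_sum z w (\<lambda>h t'. (1 / t) * ((1 / t') * (t / (t' - t)) * D h t'))"
    unfolding LinOp_eq_ray_sum ray_sum_cmult w_def by simp
  also have "ray_sum z w (\<lambda>h t'. (1 / t) * ((1 / t') * (t / (t' - t)) * D h t'))
      = ray_sum z w (\<lambda>h t'. (1 / t') * (t / (t' - t)) * (D h t' / t') + D h t' / t'^2)"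
  proof (rule ray_sum_cong)
    fix h :: "int^'m" and u :: real
    assume h: "h \<in> Gstar" "w h \<noteq> 0" "u > 0"
    define s where "s = \<i> * Zc z h * of_real u"
    have "\<Omega> h \<noteq> 0" "pairing \<omega> g h \<noteq> 0" using h(2) unfolding w_def by auto
    then have "\<not> onray (Zc z h) t" "Zc z h \<noteq> 0" using adm Z_nz h(1) unfolding adm_def by auto
    moreover have "onray (Zc z h) s" unfolding s_def using h(3) by (rule onray_ray_point)
    ultimately have "s \<noteq> 0" "s - t \<noteq> 0" using h(3) unfolding s_def by auto
    then show "(1 / t) * ((1 / s) * (t / (s - t)) * D h s) = (1 / s) * (t / (s - t)) * (D h s / s) + D h s / s^2"
      using t0 by (simp add: field_simps power2_eq_square)
  qed
  also have "\<dots> = ray_sum z w (\<lambda>h t'. (1 / t') * (t / (t' - t)) * (D h t' / t'))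
      + ray_sum z w (\<lambda>h t'. D h t' / t'^2)"
    unfolding w_def by (rule ray_sum_add[OF wL[unfolded w_def] ray_summable_pairing_weight[OF single]])
  also have "ray_sum z w (\<lambda>h t'. (1 / t') * (t / (t' - t)) * (D h t' / t'))
      = (2 * pi * \<i>) * LinOp \<omega> \<Omega> z (\<lambda>h t'. D h t' / t') g t"
    unfolding LinOp_eq_ray_sum w_def by simp
  finally show ?thesis unfolding w_def ray_sum_pairing_weight[OF single] by (simp add: distrib_left)
qed

section \<open>Double ray integrals and the quadratic term of \<open>W\<close>\<close>

definition ray2_integrand ::
    "complex \<Rightarrow> complex \<Rightarrow> (complex \<Rightarrow> complex \<Rightarrow> complex) \<Rightarrow> real \<times> real \<Rightarrow> complex" where
  "ray2_integrand Zg Zh H p = indicator ({0<..} \<times> {0<..}) p *\<^sub>R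
     ((\<i> * Zg) * (\<i> * Zh) * H (\<i> * Zg * of_real (fst p)) (\<i> * Zh * of_real (snd p)))"

lemma ray2_ok_iff_integrable: "ray2_ok Zg Zh H \<longleftrightarrow> integrable (lborel \<Otimes>\<^sub>M lborel) (ray2_integrand Zg Zh H)"
proof -
  have "(\<lambda>p. indicator ({0<..} \<times> {0<..}) p *\<^sub>R
      (\<lambda>(u, v). (\<i> * Zg) * (\<i> * Zh) * H (\<i> * Zg * of_real u) (\<i> * Zh * of_real v)) p)
      = ray2_integrand Zg Zh H"
    by (auto simp: ray2_integrand_def fun_eq_iff)
  then show ?thesis unfolding ray2_ok_def set_integrable_def by simp
qed

lemma ray2_norm_eq_integral:
  "ray2_norm Zg Zh H = integral\<^sup>L (lborel \<Otimes>\<^sub>M lborel) (\<lambda>p. norm (ray2_integrand Zg Zh H p))"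
  unfolding ray2_norm_def set_lebesgue_integral_def ray2_integrand_def
  by (rule arg_cong[where f="integral\<^sup>L (lborel \<Otimes>\<^sub>M lborel)"]) (auto simp: indicator_def fun_eq_iff)

lemma ray2_norm_nonneg: "ray2_norm Zg Zh H \<ge> 0"
  unfolding ray2_norm_eq_integral by (rule Bochner_Integration.integral_nonneg) simp

lemma integral_ray2_integrand_inner:
  "integral\<^sup>L lborel (\<lambda>v. ray2_integrand Zg Zh H (u, v)) = ray_integrand Zg (\<lambda>t. rayint Zh (H t)) u"
proof (cases "u > 0")
  case True
  then have "(\<lambda>v. ray2_integrand Zg Zh H (u, v)) = (\<lambda>v. (\<i> * Zg) * ray_integrand Zh (H (\<i> * Zg * of_real u)) v)"
    by (auto simp: ray2_integrand_def ray_integrand_def fun_eq_iff indicator_def)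
  then have "integral\<^sup>L lborel (\<lambda>v. ray2_integrand Zg Zh H (u, v))
      = (\<i> * Zg) * integral\<^sup>L lborel (ray_integrand Zh (H (\<i> * Zg * of_real u)))"
    by (simp only: integral_mult_right_zero)
  then show ?thesis
    using True by (simp add: ray_integrand_def rayint_eq_integral)
next
  case False
  then show ?thesis by (simp add: ray2_integrand_def ray_integrand_def indicator_def)
qed

lemma
  assumes "ray2_ok Zg Zh H"
  shows ray_ok_rayint: "ray_ok Zg (\<lambda>t. rayint Zh (H t))"
    and ray_norm_rayint_le: "ray_norm Zg (\<lambda>t. rayint Zh (H t)) \<le> ray2_norm Zg Zh H"
proof -
  have int: "integrable (lborel \<Otimes>\<^sub>M lborel) (ray2_integrand Zg Zh H)"
    using assms ray2_ok_iff_integrable by blast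
  have inner: "ray_integrand Zg (\<lambda>t. rayint Zh (H t)) = (\<lambda>u. integral\<^sup>L lborel (\<lambda>v. ray2_integrand Zg Zh H (u, v)))"
    by (simp add: integral_ray2_integrand_inner)
  show "ray_ok Zg (\<lambda>t. rayint Zh (H t))"
    unfolding ray_ok_iff_integrable inner by (rule lborel_pair.integrable_fst'[OF int])
  have int_norm: "integrable (lborel \<Otimes>\<^sub>M lborel) (\<lambda>p. norm (ray2_integrand Zg Zh H p))"
    using int by (rule integrable_norm)
  have "ray_norm Zg (\<lambda>t. rayint Zh (H t))
      \<le> integral\<^sup>L lborel (\<lambda>u. integral\<^sup>L lborel (\<lambda>v. norm (ray2_integrand Zg Zh H (u, v))))"
    unfolding ray_norm_eq_integral inner
    by (intro Bochner_Integration.integral_mono integrable_norm integral_norm_bound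
        lborel_pair.integrable_fst'[OF int] lborel_pair.integrable_fst'[OF int_norm, simplified])
  also have "\<dots> = ray2_norm Zg Zh H"
    unfolding ray2_norm_eq_integral using lborel_pair.integral_fst'[OF int_norm] by simp
  finally show "ray_norm Zg (\<lambda>t. rayint Zh (H t)) \<le> ray2_norm Zg Zh H" .
qed

lemma rayint_swap:
  assumes "ray2_ok Zg Zh H"
  shows "rayint Zg (\<lambda>t. rayint Zh (\<lambda>t'. H t t')) = rayint Zh (\<lambda>t'. rayint Zg (\<lambda>t. H t t'))"
proof -
  have int: "integrable (lborel \<Otimes>\<^sub>M lborel) (\<lambda>(u, v). ray2_integrand Zg Zh H (u, v))"
    using assms ray2_ok_iff_integrable by (simp add: case_prod_eta)
  have swap: "ray2_integrand Zh Zg (\<lambda>t' t. H t t') (v, u) = ray2_integrand Zg Zh H (u, v)" for u v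
    by (auto simp: ray2_integrand_def indicator_def algebra_simps)
  have "rayint Zg (\<lambda>t. rayint Zh (H t))
      = integral\<^sup>L lborel (\<lambda>u. integral\<^sup>L lborel (\<lambda>v. ray2_integrand Zg Zh H (u, v)))"
    unfolding integral_ray2_integrand_inner rayint_eq_integral ..
  also have "\<dots> = integral\<^sup>L lborel (\<lambda>v. integral\<^sup>L lborel (\<lambda>u. ray2_integrand Zg Zh H (u, v)))"
    using lborel_pair.Fubini_integral[where f="\<lambda>u v. ray2_integrand Zg Zh H (u, v)"] int by simp
  also have "\<dots> = rayint Zh (\<lambda>t'. rayint Zg (\<lambda>t. H t t'))"
    unfolding swap[symmetric] integral_ray2_integrand_inner rayint_eq_integral ..
  finally show ?thesis by simp
qed

lemma infsum_eq_integral_count_space: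
  fixes f :: "'a \<Rightarrow> complex"
  shows "infsum f A = integral\<^sup>L (count_space A) f"
proof (cases "integrable (count_space A) f")
  case True
  then have "Infinite_Set_Sum.abs_summable_on f A" by (simp add: abs_summable_on_def)
  from infsetsum_infsum[OF this] show ?thesis unfolding infsetsum_def by simp
next
  case False
  then have "\<not> Infinite_Sum.abs_summable_on f A"
    using abs_summable_equivalent by (auto simp: abs_summable_on_def)
  then have "\<not> f summable_on A" using summable_on_iff_abs_summable_on_complex by blast
  then show ?thesis using False by (simp add: infsum_not_exists not_integrable_integral_eq)
qed

lemma infsum_integral_swap:
  fixes f :: "'a \<Rightarrow> real \<Rightarrow> complex"
  assumes A: "countable A" and f: "\<And>h. h \<in> A \<Longrightarrow> integrable lborel (f h)"
    and summable: "(\<lambda>h. integral\<^sup>L lborel (\<lambda>u. norm (f h u))) summable_on A"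
  shows "(\<Sum>\<^sub>\<infinity>h\<in>A. integral\<^sup>L lborel (f h)) = integral\<^sup>L lborel (\<lambda>u. \<Sum>\<^sub>\<infinity>h\<in>A. f h u)"
proof -
  interpret P: pair_sigma_finite "count_space A" lborel
    by (intro pair_sigma_finite.intro sigma_finite_measure_count_space_countable A sigma_finite_lborel)
  have meas: "(\<lambda>(h, u). f h u) \<in> borel_measurable (count_space A \<Otimes>\<^sub>M lborel)"
    by (rule measurable_pair_measure_countable1[OF A]) (use f in simp)
  have "(\<lambda>h. norm (integral\<^sup>L lborel (\<lambda>u. norm (f h u)))) = (\<lambda>h. integral\<^sup>L lborel (\<lambda>u. norm (f h u)))"
    by (simp add: abs_of_nonneg Bochner_Integration.integral_nonneg)
  then have "Infinite_Sum.abs_summable_on (\<lambda>h. integral\<^sup>L lborel (\<lambda>u. norm (f h u))) A"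
    using summable by (simp only:)
  then have "Infinite_Set_Sum.abs_summable_on (\<lambda>h. integral\<^sup>L lborel (\<lambda>u. norm (f h u))) A"
    using abs_summable_equivalent by blast
  then have "integrable (count_space A) (\<lambda>h. integral\<^sup>L lborel (\<lambda>u. norm (f h u)))"
    by (simp add: abs_summable_on_def)
  then have "integrable (count_space A \<Otimes>\<^sub>M lborel) (\<lambda>(h, u). f h u)"
    by (intro P.Fubini_integrable[OF meas]) (auto simp: AE_count_space f)
  then have "integral\<^sup>L lborel (\<lambda>u. integral\<^sup>L (count_space A) (\<lambda>h. f h u)) =
      integral\<^sup>L (count_space A) (\<lambda>h. integral\<^sup>L lborel (f h))"
    by (rule P.Fubini_integral)
  then show ?thesis by (simp add: infsum_eq_integral_count_space)
qed

lemma infsum_rayint: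
  assumes "countable A" "\<And>h. h \<in> A \<Longrightarrow> ray_ok Z (K h)" "(\<lambda>h. ray_norm Z (K h)) summable_on A"
  shows "(\<Sum>\<^sub>\<infinity>h\<in>A. rayint Z (K h)) = rayint Z (\<lambda>t. \<Sum>\<^sub>\<infinity>h\<in>A. K h t)"
proof -
  have "(\<Sum>\<^sub>\<infinity>h\<in>A. rayint Z (K h)) = integral\<^sup>L lborel (\<lambda>u. \<Sum>\<^sub>\<infinity>h\<in>A. ray_integrand Z (K h) u)"
    unfolding rayint_eq_integral using assms
    by (intro infsum_integral_swap) (simp_all add: ray_ok_iff_integrable ray_norm_eq_integral)
  also have "(\<lambda>u. \<Sum>\<^sub>\<infinity>h\<in>A. ray_integrand Z (K h) u) = ray_integrand Z (\<lambda>t. \<Sum>\<^sub>\<infinity>h\<in>A. K h t)"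
    by (auto simp: ray_integrand_def fun_eq_iff indicator_def infsum_cmult_right')
  finally show ?thesis unfolding rayint_eq_integral .
qed

definition double_kernel :: "(int^'m::finite \<Rightarrow> complex \<Rightarrow> complex) \<Rightarrow> (int^'m \<Rightarrow> complex \<Rightarrow> complex)
    \<Rightarrow> int^'m \<Rightarrow> int^'m \<Rightarrow> complex \<Rightarrow> complex \<Rightarrow> complex" where
  "double_kernel F G g h = (\<lambda>t t'. (1 / t^2) * (1 / t'^2) * (t * t' / (t' - t)) * F g t * G h t')"

definition double_term :: "('m::finite \<Rightarrow> 'm \<Rightarrow> int) \<Rightarrow> (int^'m \<Rightarrow> rat) \<Rightarrow> complex^'m
    \<Rightarrow> (int^'m \<Rightarrow> complex \<Rightarrow> complex) \<Rightarrow> (int^'m \<Rightarrow> complex \<Rightarrow> complex) \<Rightarrow> int^'m \<Rightarrow> int^'m \<Rightarrow> complex" where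
  "double_term \<omega> \<Omega> z F G g h = of_rat (\<Omega> g) * of_rat (\<Omega> h) * of_int (pairing \<omega> g h) *
     rayint (Zc z g) (\<lambda>t. rayint (Zc z h) (double_kernel F G g h t))"

lemma Dfun_eq_infsum_double_term:
  "Dfun \<omega> \<Omega> z F G = (\<Sum>\<^sub>\<infinity>(g, h)\<in>Gstar \<times> Gstar. double_term \<omega> \<Omega> z F G g h)"
proof -
  have "rayint (Zc z h) (\<lambda>t'. (1 / t^2) * (1 / t'^2) * of_int (pairing \<omega> g h) * (t * t' / (t' - t)) * F g t * G h t')
      = of_int (pairing \<omega> g h) * rayint (Zc z h) (double_kernel F G g h t)" for g h t
    unfolding double_kernel_def rayint_cmult[symmetric] by (simp add: mult_ac)
  then show ?thesis
    unfolding Dfun_def double_term_def by (simp add: rayint_cmult mult.assoc)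
qed

lemma abs_double_iff_double_kernel: "abs_double \<omega> \<Omega> z F G \<longleftrightarrow>
     (\<forall>g\<in>Gstar. \<forall>h\<in>Gstar. \<Omega> g \<noteq> 0 \<and> \<Omega> h \<noteq> 0 \<and> pairing \<omega> g h \<noteq> 0 \<longrightarrow>
        ray2_ok (Zc z g) (Zc z h) (double_kernel F G g h)) \<and>
     (\<lambda>(g, h). of_rat \<bar>\<Omega> g\<bar> * of_rat \<bar>\<Omega> h\<bar> * of_int \<bar>pairing \<omega> g h\<bar> *
        ray2_norm (Zc z g) (Zc z h) (double_kernel F G g h)) summable_on (Gstar \<times> Gstar)"
  unfolding abs_double_def double_kernel_def ..

lemma double_term_summable:
  fixes z :: "complex^'m::finite"
  assumes "abs_double \<omega> \<Omega> z F G"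
  shows "(\<lambda>(g, h). double_term \<omega> \<Omega> z F G g h) summable_on (Gstar \<times> Gstar)"
proof -
  note ok = assms[unfolded abs_double_iff_double_kernel, THEN conjunct1]
  have "Infinite_Sum.abs_summable_on (\<lambda>(g, h). double_term \<omega> \<Omega> z F G g h) (Gstar \<times> Gstar)"
  proof (rule Infinite_Sum.abs_summable_on_comparison_test')
    show "(\<lambda>(g, h). of_rat \<bar>\<Omega> g\<bar> * of_rat \<bar>\<Omega> h\<bar> * of_int \<bar>pairing \<omega> g h\<bar> *
        ray2_norm (Zc z g) (Zc z h) (double_kernel F G g h)) summable_on (Gstar \<times> Gstar)"
      using assms unfolding abs_double_iff_double_kernel by blast
  next
    fix p :: "(int^'m) \<times> (int^'m)" assume "p \<in> Gstar \<times> Gstar"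
    then obtain g h where p: "p = (g, h)" "g \<in> Gstar" "h \<in> Gstar" by blast
    show "norm (case p of (g, h) \<Rightarrow> double_term \<omega> \<Omega> z F G g h) \<le> (case p of (g, h) \<Rightarrow>
        of_rat \<bar>\<Omega> g\<bar> * of_rat \<bar>\<Omega> h\<bar> * of_int \<bar>pairing \<omega> g h\<bar> * ray2_norm (Zc z g) (Zc z h) (double_kernel F G g h))"
    proof (cases "\<Omega> g \<noteq> 0 \<and> \<Omega> h \<noteq> 0 \<and> pairing \<omega> g h \<noteq> 0")
      case True
      have "norm (rayint (Zc z g) (\<lambda>t. rayint (Zc z h) (double_kernel F G g h t)))
          \<le> ray2_norm (Zc z g) (Zc z h) (double_kernel F G g h)"
        using ok p True norm_rayint_le ray_norm_rayint_le order_trans by blast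
      then show ?thesis
        unfolding p double_term_def by (simp add: norm_mult norm_of_rat_complex mult_left_mono)
    qed (auto simp: p double_term_def ray2_norm_nonneg)
  qed
  then show ?thesis by (rule abs_summable_summable)
qed

lemma double_kernel_swap: "double_kernel F G g h t' t = - double_kernel G F h g t t'"
proof (cases "t = t'")
  case False
  then have "t' * t / (t - t') = - (t * t' / (t' - t))"
    by (simp add: field_simps)
  then show ?thesis unfolding double_kernel_def by (simp add: algebra_simps)
qed (simp add: double_kernel_def)

lemma double_term_swap:
  fixes z :: "complex^'m::finite"
  assumes skew: "\<forall>a b. \<omega> a b = - \<omega> b a" and YX: "abs_double \<omega> \<Omega> z Y X"
    and g: "g \<in> Gstar" and h: "h \<in> Gstar"
  shows "double_term \<omega> \<Omega> z Y X h g = double_term \<omega> \<Omega> z X Y g h"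
proof (cases "\<Omega> g \<noteq> 0 \<and> \<Omega> h \<noteq> 0 \<and> pairing \<omega> g h \<noteq> 0")
  case True
  have skew_gh: "pairing \<omega> h g = - pairing \<omega> g h" by (rule pairing_skew[OF skew])
  then have "ray2_ok (Zc z h) (Zc z g) (double_kernel Y X h g)"
    using YX True g h unfolding abs_double_iff_double_kernel by auto
  then have "rayint (Zc z h) (\<lambda>t. rayint (Zc z g) (double_kernel Y X h g t))
      = rayint (Zc z g) (\<lambda>t'. rayint (Zc z h) (\<lambda>t. double_kernel Y X h g t t'))"
    using rayint_swap by simp
  also have "\<dots> = rayint (Zc z g) (\<lambda>t'. rayint (Zc z h) (\<lambda>t. (-1) * double_kernel X Y g h t' t))"
    by (simp add: double_kernel_swap[of X Y g h])
  also have "\<dots> = - rayint (Zc z g) (\<lambda>t'. rayint (Zc z h) (double_kernel X Y g h t'))"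
    by (simp only: rayint_cmult) simp
  finally show ?thesis unfolding double_term_def skew_gh by simp
next
  case False
  then show ?thesis using pairing_skew[OF skew, of h g] unfolding double_term_def by auto
qed

text \<open>The two halves of the second term of \<open>W\<close> agree: swapping the integrations and
  the charges changes the sign of both \<open>t t'/(t' - t)\<close> and \<open>\<langle>\<gamma>, \<gamma>'\<rangle>\<close>.\<close>
lemma Dfun_swap:
  fixes z :: "complex^'m::finite"
  assumes skew: "\<forall>a b. \<omega> a b = - \<omega> b a" and YX: "abs_double \<omega> \<Omega> z Y X"
  shows "Dfun \<omega> \<Omega> z Y X = Dfun \<omega> \<Omega> z X Y"
proof -
  have "bij_betw prod.swap (Gstar \<times> Gstar) (Gstar \<times> Gstar)"
    by (auto simp: bij_betw_def inj_on_def image_def)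
  then have "Dfun \<omega> \<Omega> z Y X = (\<Sum>\<^sub>\<infinity>p\<in>Gstar \<times> Gstar. (\<lambda>(g, h). double_term \<omega> \<Omega> z Y X g h) (prod.swap p))"
    unfolding Dfun_eq_infsum_double_term by (rule infsum_reindex_bij_betw[symmetric])
  also have "\<dots> = Dfun \<omega> \<Omega> z X Y"
    unfolding Dfun_eq_infsum_double_term by (rule infsum_cong) (auto simp: double_term_swap[OF skew YX])
  finally show ?thesis .
qed

lemma double_kernel_factor:
  "double_kernel X Y g h t t' = X g t / t^2 * ((1 / t') * (t / (t' - t)) * Y h t')"
proof (cases "t = 0 \<or> t' = 0 \<or> t' = t")
  case False
  then show ?thesis unfolding double_kernel_def by (simp add: field_simps power2_eq_square)
qed (auto simp: double_kernel_def)

lemma infsum_double_term_slice: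
  fixes z :: "complex^'m::finite"
  assumes XY: "abs_double \<omega> \<Omega> z X Y" and g: "g \<in> Gstar"
  shows "(\<Sum>\<^sub>\<infinity>h\<in>Gstar. double_term \<omega> \<Omega> z X Y g h) = of_rat (\<Omega> g) * rayint (Zc z g) (\<lambda>t. X g t / t^2 *
     ray_sum z (\<lambda>h. of_rat (\<Omega> h) * of_int (pairing \<omega> g h)) (\<lambda>h t'. (1 / t') * (t / (t' - t)) * Y h t'))"
proof (cases "\<Omega> g = 0")
  case False
  define c where "c h = (of_rat (\<Omega> h) * of_int (pairing \<omega> g h) :: complex)" for h
  define K where "K h t = c h * rayint (Zc z h) (double_kernel X Y g h t)" for h t
  have term_eq: "double_term \<omega> \<Omega> z X Y g h = of_rat (\<Omega> g) * rayint (Zc z g) (K h)" for h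
    unfolding double_term_def K_def c_def rayint_cmult by (simp add: mult.assoc)
  have ok: "ray2_ok (Zc z g) (Zc z h) (double_kernel X Y g h)" if "h \<in> Gstar" "c h \<noteq> 0" for h
    using XY that g False unfolding abs_double_iff_double_kernel c_def by auto
  have K_ok: "ray_ok (Zc z g) (K h)" if "h \<in> Gstar" for h
    using ok[OF that] ray_ok_cmult ray_ok_rayint ray_ok_zero unfolding K_def
    by (cases "c h = 0") auto
  have K_le: "ray_norm (Zc z g) (K h) \<le> norm (c h) * ray2_norm (Zc z g) (Zc z h) (double_kernel X Y g h)"
    if "h \<in> Gstar" for h
    using ok[OF that] ray_norm_rayint_le unfolding K_def ray_norm_cmult
    by (cases "c h = 0") (auto intro: mult_left_mono)
  have "(\<lambda>h. of_rat \<bar>\<Omega> g\<bar> * of_rat \<bar>\<Omega> h\<bar> * of_int \<bar>pairing \<omega> g h\<bar> *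
        ray2_norm (Zc z g) (Zc z h) (double_kernel X Y g h)) summable_on Gstar"
    using summable_on_SigmaD1[where f="\<lambda>g h. of_rat \<bar>\<Omega> g\<bar> * of_rat \<bar>\<Omega> h\<bar> * of_int \<bar>pairing \<omega> g h\<bar> *
        ray2_norm (Zc z g) (Zc z h) (double_kernel X Y g h)" and B="\<lambda>_. Gstar", OF _ g] XY
    unfolding abs_double_iff_double_kernel by blast
  then have "(\<lambda>h. (1 / of_rat \<bar>\<Omega> g\<bar>) * (of_rat \<bar>\<Omega> g\<bar> * of_rat \<bar>\<Omega> h\<bar> * of_int \<bar>pairing \<omega> g h\<bar> *
        ray2_norm (Zc z g) (Zc z h) (double_kernel X Y g h))) summable_on Gstar"
    by (rule summable_on_cmult_right)
  then have "(\<lambda>h. norm (c h) * ray2_norm (Zc z g) (Zc z h) (double_kernel X Y g h)) summable_on Gstar"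
    using False by (simp add: c_def norm_mult norm_of_rat_complex mult.assoc)
  then have K_summable: "(\<lambda>h. ray_norm (Zc z g) (K h)) summable_on Gstar"
    by (rule summable_on_comparison_test) (simp_all add: K_le ray_norm_nonneg)
  have K_sum: "(\<Sum>\<^sub>\<infinity>h\<in>Gstar. K h t) = X g t / t^2 *
      ray_sum z c (\<lambda>h t'. (1 / t') * (t / (t' - t)) * Y h t')" for t
    unfolding K_def ray_sum_def double_kernel_factor[abs_def] rayint_cmult
    by (simp add: infsum_cmult_right'[symmetric] mult_ac)
  have "(\<Sum>\<^sub>\<infinity>h\<in>Gstar. double_term \<omega> \<Omega> z X Y g h) = of_rat (\<Omega> g) * (\<Sum>\<^sub>\<infinity>h\<in>Gstar. rayint (Zc z g) (K h))"
    unfolding term_eq by (rule infsum_cmult_right')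
  also have "(\<Sum>\<^sub>\<infinity>h\<in>Gstar. rayint (Zc z g) (K h)) = rayint (Zc z g) (\<lambda>t. \<Sum>\<^sub>\<infinity>h\<in>Gstar. K h t)"
    by (rule infsum_rayint[OF countableI_type K_ok K_summable])
  finally show ?thesis unfolding K_sum c_def .
qed (simp add: double_term_def)

lemma Dfun_iterated:
  fixes z :: "complex^'m::finite"
  assumes "abs_double \<omega> \<Omega> z X Y"
  shows "Dfun \<omega> \<Omega> z X Y = (\<Sum>\<^sub>\<infinity>g\<in>Gstar. of_rat (\<Omega> g) * rayint (Zc z g) (\<lambda>t. X g t / t^2 *
     ray_sum z (\<lambda>h. of_rat (\<Omega> h) * of_int (pairing \<omega> g h)) (\<lambda>h t'. (1 / t') * (t / (t' - t)) * Y h t')))"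
    (is "_ = ?rhs")
proof -
  have "Dfun \<omega> \<Omega> z X Y = (\<Sum>\<^sub>\<infinity>g\<in>Gstar. \<Sum>\<^sub>\<infinity>h\<in>Gstar. double_term \<omega> \<Omega> z X Y g h)"
    unfolding Dfun_eq_infsum_double_term using infsum_Sigma'_banach[OF double_term_summable[OF assms]]
    by simp
  also have "\<dots> = ?rhs"
    by (rule infsum_cong) (rule infsum_double_term_slice[OF assms])
  finally show ?thesis .
qed

text \<open>If \<open>Y\<close> solves the linearised TBA equation \<open>Y = X (\<kappa> + L[Y])\<close> on the rays, the two
  double integrals (equal by \<open>Dfun_swap\<close>) exactly cancel the \<open>L[Y]\<close> part of the single
  integral.  With \<open>Y\<close> a first derivative of \<open>X\<close> this computes the first derivatives of \<open>W\<close>.\<close>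
lemma variation_formula_collapse:
  fixes z :: "complex^'m::finite"
  assumes skew: "\<forall>a b. \<omega> a b = - \<omega> b a"
    and linearised: "\<And>g u. g \<in> Gstar \<Longrightarrow> \<Omega> g \<noteq> 0 \<Longrightarrow> u > 0 \<Longrightarrow>
       Y g (\<i> * Zc z g * of_real u) = X g (\<i> * Zc z g * of_real u) *
         (\<kappa> g (\<i> * Zc z g * of_real u) + LinOp \<omega> \<Omega> z Y g (\<i> * Zc z g * of_real u))"
    and XY: "abs_double \<omega> \<Omega> z X Y" and YX: "abs_double \<omega> \<Omega> z Y X"
    and Y: "ray_summable z (\<lambda>g. of_rat (\<Omega> g)) (\<lambda>g t. Y g t / t^2)"
    and \<kappa>X: "ray_summable z (\<lambda>g. of_rat (\<Omega> g)) (\<lambda>g t. \<kappa> g t * X g t / t^2)"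
  shows "(1 / (2 * pi * \<i>)) * Sfun \<Omega> z (\<lambda>g t. Y g t / t^2)
      - (1 / (2 * (2 * pi * \<i>)^2)) * (Dfun \<omega> \<Omega> z Y X + Dfun \<omega> \<Omega> z X Y)
      = (1 / (2 * pi * \<i>)) * Sfun \<Omega> z (\<lambda>g t. \<kappa> g t * X g t / t^2)"
proof -
  define c :: complex where "c = 2 * pi * \<i>"
  have c0: "c \<noteq> 0" unfolding c_def by simp
  have "Dfun \<omega> \<Omega> z X Y = ray_sum z (\<lambda>g. of_rat (\<Omega> g)) (\<lambda>g t. c * (X g t / t^2 * LinOp \<omega> \<Omega> z Y g t))"
    unfolding Dfun_iterated[OF XY] ray_sum_def LinOp_eq_ray_sum c_def[symmetric] using c0
    by (simp add: mult_ac)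
  also have "\<dots> = c * ray_sum z (\<lambda>g. of_rat (\<Omega> g)) (\<lambda>g t. Y g t / t^2 + (-1) * (\<kappa> g t * X g t / t^2))"
    unfolding ray_sum_cmult
  proof (intro arg_cong[where f="(*) c"] ray_sum_cong)
    fix g :: "int^'m" and u :: real
    assume "g \<in> Gstar" "of_rat (\<Omega> g) \<noteq> (0::complex)" "u > 0"
    then show "X g (\<i> * Zc z g * of_real u) / (\<i> * Zc z g * of_real u)^2 * LinOp \<omega> \<Omega> z Y g (\<i> * Zc z g * of_real u)
      = Y g (\<i> * Zc z g * of_real u) / (\<i> * Zc z g * of_real u)^2
        + (-1) * (\<kappa> g (\<i> * Zc z g * of_real u) * X g (\<i> * Zc z g * of_real u) / (\<i> * Zc z g * of_real u)^2)"
      using linearised by (simp add: distrib_left add_divide_distrib mult.commute)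
  qed
  also have "\<dots> = c * (Sfun \<Omega> z (\<lambda>g t. Y g t / t^2) - Sfun \<Omega> z (\<lambda>g t. \<kappa> g t * X g t / t^2))"
    using ray_sum_add[OF Y ray_summable_cmult[OF \<kappa>X, where c="-1"]] ray_sum_cmult[of z _ "-1"]
    unfolding Sfun_eq_ray_sum by simp
  finally have XY_eq: "Dfun \<omega> \<Omega> z X Y = \<dots>" .
  show ?thesis
    unfolding Dfun_swap[OF skew YX] XY_eq c_def[symmetric] using c0 by (simp add: field_simps power2_eq_square)
qed

section \<open>Derivatives of \<open>W\<close> and the Lax equation\<close>

lemma vupd_self: "vupd z a (z$a) = z"
  by (simp add: vupd_def vec_eq_iff)

lemma continuous_on_vupd: "continuous_on UNIV (vupd z a)"
  unfolding vupd_def[abs_def]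
proof (intro continuous_on_vec_lambda)
  fix i show "continuous_on UNIV (\<lambda>x. if i = a then x else z $ i)"
    by (cases "i = a") (simp_all add: continuous_on_id continuous_on_const)
qed

lemma lax_field_identity:
  fixes x Dz Dt Lz Lt Lt' P Q S ga t :: complex
  assumes t: "t \<noteq> 0"
    and Dz: "Dz = x * (- 2 * pi * \<i> * ga / t + Lz)"
    and Dt: "Dt = x * (2 * pi * \<i> * ga + Lt)"
    and Lt: "(1 / t) * Lt = Lt' - (1 / (2 * pi * \<i>)) * P"
    and S: "S = x * (2 * pi * \<i>) * P + x * Q"
  shows "Dz + Dt / t - 1 / (2 * pi)^2 * S = x * (Lz + Lt' - 1 / (2 * pi)^2 * Q)"
proof -
  have Lt_eq: "Lt = t * Lt' - t * (1 / (2 * pi * \<i>)) * P"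
    using Lt t by (simp add: field_simps)
  have "pi \<noteq> 0" by simp
  then show ?thesis unfolding Dz Dt Lt_eq S using t by (simp add: field_simps power2_eq_square)
qed

locale tba_variations =
  fixes \<omega> :: "'m::finite \<Rightarrow> 'm \<Rightarrow> int"
    and \<Omega> :: "int^'m \<Rightarrow> rat"
    and U :: "(complex^'m) set"
    and X :: "int^'m \<Rightarrow> complex^'m \<Rightarrow> complex^'m \<Rightarrow> complex \<Rightarrow> complex"
    and W :: "complex^'m \<Rightarrow> complex^'m \<Rightarrow> complex"
  assumes skew: "\<forall>a b. \<omega> a b = - \<omega> b a"
    and U_open: "open U"
    and Z_nz: "\<forall>z\<in>U. \<forall>g\<in>Gstar. \<Omega> g \<noteq> 0 \<longrightarrow> Zc z g \<noteq> 0"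
    and generic: "\<forall>z\<in>U. \<forall>g\<in>Gstar. \<Omega> g \<noteq> 0 \<longrightarrow> (\<forall>t. onray (Zc z g) t \<longrightarrow> adm \<omega> \<Omega> z g t)"
    and dX_theta: "\<forall>z\<in>U. \<forall>\<theta> g t a. adm \<omega> \<Omega> z g t \<longrightarrow>
               ((\<lambda>w. X g z (vupd \<theta> a w) t) has_field_derivative
                  X g z \<theta> t * (2 * pi * \<i> * of_int (g$a) + LinOp \<omega> \<Omega> z (\<lambda>h. dthX a X h z \<theta>) g t))
               (at (\<theta>$a))"
    and dX_z: "\<forall>z\<in>U. \<forall>\<theta> g t a. adm \<omega> \<Omega> z g t \<longrightarrow>
               ((\<lambda>w. X g (vupd z a w) \<theta> t) has_field_derivative
                  X g z \<theta> t * (- 2 * pi * \<i> * of_int (g$a) / t + LinOp \<omega> \<Omega> z (\<lambda>h. dzX a X h z \<theta>) g t))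
               (at (z$a))"
    and dW_theta: "\<forall>z\<in>U. \<forall>\<theta> a.
               ((\<lambda>w. W z (vupd \<theta> a w)) has_field_derivative
                  (1 / (2 * pi * \<i>)) * Sfun \<Omega> z (\<lambda>g t. dthX a X g z \<theta> t / t^2)
                  - (1 / (2 * (2 * pi * \<i>)^2)) *
                    (Dfun \<omega> \<Omega> z (\<lambda>g. dthX a X g z \<theta>) (\<lambda>g. X g z \<theta>)
                     + Dfun \<omega> \<Omega> z (\<lambda>g. X g z \<theta>) (\<lambda>g. dthX a X g z \<theta>)))
               (at (\<theta>$a))"
    and dW_z: "\<forall>z\<in>U. \<forall>\<theta> a.
               ((\<lambda>w. W (vupd z a w) \<theta>) has_field_derivative
                  (1 / (2 * pi * \<i>)) * Sfun \<Omega> z (\<lambda>g t. dzX a X g z \<theta> t / t^2)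
                  - (1 / (2 * (2 * pi * \<i>)^2)) *
                    (Dfun \<omega> \<Omega> z (\<lambda>g. dzX a X g z \<theta>) (\<lambda>g. X g z \<theta>)
                     + Dfun \<omega> \<Omega> z (\<lambda>g. X g z \<theta>) (\<lambda>g. dzX a X g z \<theta>)))
               (at (z$a))"
    and dS: "\<forall>z\<in>U. \<forall>\<theta> a b.
               ((\<lambda>w. Sfun \<Omega> z (\<lambda>g t. of_int (g$a) * X g z (vupd \<theta> b w) t / t^2)) has_field_derivative
                  Sfun \<Omega> z (\<lambda>g t. of_int (g$a) * dthX b X g z \<theta> t / t^2)) (at (\<theta>$b)) \<and>
               ((\<lambda>w. Sfun \<Omega> (vupd z b w) (\<lambda>g t. of_int (g$a) * X g (vupd z b w) \<theta> t / t^2)) has_field_derivative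
                  Sfun \<Omega> z (\<lambda>g t. of_int (g$a) * dzX b X g z \<theta> t / t^2)) (at (z$b)) \<and>
               ((\<lambda>w. Sfun \<Omega> z (\<lambda>g t. of_int (g$a) * X g z (vupd \<theta> b w) t / t^3)) has_field_derivative
                  Sfun \<Omega> z (\<lambda>g t. of_int (g$a) * dthX b X g z \<theta> t / t^3)) (at (\<theta>$b))"
    and mixed: "\<forall>z\<in>U. \<forall>\<theta> a b. dth a (dth b W) z \<theta> = dth b (dth a W) z \<theta> \<and>
                                 dz a (dth b W) z \<theta> = dth b (dz a W) z \<theta>"
    and abs_conv: "\<forall>z\<in>U. \<forall>\<theta> a. \<forall>Y\<in>{X, dthX a X, dzX a X}.
               abs_single \<Omega> z (\<lambda>g t. Y g z \<theta> t / t^2) \<and>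
               abs_single \<Omega> z (\<lambda>g t. Y g z \<theta> t / t^3) \<and>
               abs_double \<omega> \<Omega> z (\<lambda>g. X g z \<theta>) (\<lambda>g. Y g z \<theta>) \<and>
               abs_double \<omega> \<Omega> z (\<lambda>g. Y g z \<theta>) (\<lambda>g. X g z \<theta>) \<and>
               (\<forall>g t. adm \<omega> \<Omega> z g t \<longrightarrow>
                  abs_lin \<omega> \<Omega> z g t (\<lambda>h. Y h z \<theta>) \<and>
                  abs_lin \<omega> \<Omega> z g t (\<lambda>h t'. Y h z \<theta> t' / t'))"
    and inversion: "\<forall>z\<in>U. \<forall>\<theta>. \<forall>Y. (\<forall>g t. adm \<omega> \<Omega> z g t \<longrightarrow>
                  abs_lin \<omega> \<Omega> z g t Y \<and> Y g t = X g z \<theta> t * LinOp \<omega> \<Omega> z Y g t)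
               \<longrightarrow> (\<forall>g t. adm \<omega> \<Omega> z g t \<longrightarrow> Y g t = 0)"
begin

lemma adm_ray_point:
  assumes "z \<in> U" "g \<in> Gstar" "\<Omega> g \<noteq> 0" "u > 0"
  shows "adm \<omega> \<Omega> z g (\<i> * Zc z g * of_real u)"
  using generic assms onray_ray_point by blast

lemma dthX_eq:
  assumes "z \<in> U" "adm \<omega> \<Omega> z g t"
  shows "dthX a X g z \<theta> t = X g z \<theta> t * (2 * pi * \<i> * of_int (g$a) + LinOp \<omega> \<Omega> z (\<lambda>h. dthX a X h z \<theta>) g t)"
  unfolding dthX_def[of a X g z \<theta> t] dth_def using dX_theta assms by (blast intro: DERIV_imp_deriv)

lemma dzX_eq:
  assumes "z \<in> U" "adm \<omega> \<Omega> z g t"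
  shows "dzX a X g z \<theta> t = X g z \<theta> t * (- 2 * pi * \<i> * of_int (g$a) / t + LinOp \<omega> \<Omega> z (\<lambda>h. dzX a X h z \<theta>) g t)"
  unfolding dzX_def[of a X g z \<theta> t] dz_def using dX_z assms by (blast intro: DERIV_imp_deriv)

lemma
  assumes "z \<in> U" "Y \<in> {X, dthX a X, dzX a X}"
  shows abs_single_sq: "abs_single \<Omega> z (\<lambda>g t. Y g z \<theta> t / t^2)"
    and abs_single_cube: "abs_single \<Omega> z (\<lambda>g t. Y g z \<theta> t / t^3)"
    and abs_double_XY: "abs_double \<omega> \<Omega> z (\<lambda>g. X g z \<theta>) (\<lambda>g. Y g z \<theta>)"
    and abs_double_YX: "abs_double \<omega> \<Omega> z (\<lambda>g. Y g z \<theta>) (\<lambda>g. X g z \<theta>)"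
  using abs_conv assms by blast+

lemma
  assumes "z \<in> U" "Y \<in> {X, dthX a X, dzX a X}" "adm \<omega> \<Omega> z g t"
  shows abs_lin_Y: "abs_lin \<omega> \<Omega> z g t (\<lambda>h. Y h z \<theta>)"
    and abs_lin_Y_div: "abs_lin \<omega> \<Omega> z g t (\<lambda>h t'. Y h z \<theta> t' / t')"
  using abs_conv assms by blast+

lemma dth_W:
  assumes z: "z \<in> U"
  shows "dth d W z \<theta> = Sfun \<Omega> z (\<lambda>g t. of_int (g$d) * X g z \<theta> t / t^2)"
proof -
  have "dth d W z \<theta> = (1 / (2 * pi * \<i>)) * Sfun \<Omega> z (\<lambda>g t. dthX d X g z \<theta> t / t^2)
      - (1 / (2 * (2 * pi * \<i>)^2)) * (Dfun \<omega> \<Omega> z (\<lambda>g. dthX d X g z \<theta>) (\<lambda>g. X g z \<theta>)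
        + Dfun \<omega> \<Omega> z (\<lambda>g. X g z \<theta>) (\<lambda>g. dthX d X g z \<theta>))"
    unfolding dth_def using dW_theta z by (blast intro: DERIV_imp_deriv)
  also have "\<dots> = (1 / (2 * pi * \<i>)) * Sfun \<Omega> z (\<lambda>g t. (2 * pi * \<i> * of_int (g$d)) * X g z \<theta> t / t^2)"
  proof (rule variation_formula_collapse[OF skew])
    show "abs_double \<omega> \<Omega> z (\<lambda>g. X g z \<theta>) (\<lambda>g. dthX d X g z \<theta>)"
      and "abs_double \<omega> \<Omega> z (\<lambda>g. dthX d X g z \<theta>) (\<lambda>g. X g z \<theta>)"
      using abs_double_XY[OF z, where Y="dthX d X" and a=d] abs_double_YX[OF z, where Y="dthX d X" and a=d]
      by simp_all
    show "ray_summable z (\<lambda>g. of_rat (\<Omega> g)) (\<lambda>g t. dthX d X g z \<theta> t / t^2)"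
      by (rule ray_summable_Omega[OF abs_single_sq[OF z, where Y="dthX d X" and a=d]]) simp
    show "ray_summable z (\<lambda>g. of_rat (\<Omega> g)) (\<lambda>g t. (2 * pi * \<i> * of_int (g$d)) * X g z \<theta> t / t^2)"
      using ray_summable_cmult[OF ray_summable_Omega_charge_integrand[OF abs_single_sq[OF z, where Y=X]],
          where c="2 * pi * \<i>"]
      by (simp add: mult.assoc)
  qed (use dthX_eq adm_ray_point z in blast)
  also have "\<dots> = Sfun \<Omega> z (\<lambda>g t. of_int (g$d) * X g z \<theta> t / t^2)"
    using ray_sum_cmult[of z "\<lambda>g. of_rat (\<Omega> g)" "2 * pi * \<i>" "\<lambda>g t. of_int (g$d) * X g z \<theta> t / t^2"]
    unfolding Sfun_eq_ray_sum by (simp add: mult.assoc)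
  finally show ?thesis .
qed

lemma dz_W:
  assumes z: "z \<in> U"
  shows "dz a W z \<theta> = - Sfun \<Omega> z (\<lambda>g t. of_int (g$a) * X g z \<theta> t / t^3)"
proof -
  have \<kappa>X: "(\<lambda>g t. (- 2 * pi * \<i> * of_int (g$a) / t) * X g z \<theta> t / t^2) =
      (\<lambda>g t. (- (2 * pi * \<i>)) * (of_int (g$a) * (X g z \<theta> t / t^3)))"
  proof (intro ext)
    fix g and t :: complex
    show "(- 2 * pi * \<i> * of_int (g$a) / t) * X g z \<theta> t / t^2 = (- (2 * pi * \<i>)) * (of_int (g$a) * (X g z \<theta> t / t^3))"
      by (cases "t = 0") (simp_all add: field_simps power2_eq_square power3_eq_cube)
  qed
  have "dz a W z \<theta> = (1 / (2 * pi * \<i>)) * Sfun \<Omega> z (\<lambda>g t. dzX a X g z \<theta> t / t^2)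
      - (1 / (2 * (2 * pi * \<i>)^2)) * (Dfun \<omega> \<Omega> z (\<lambda>g. dzX a X g z \<theta>) (\<lambda>g. X g z \<theta>)
        + Dfun \<omega> \<Omega> z (\<lambda>g. X g z \<theta>) (\<lambda>g. dzX a X g z \<theta>))"
    unfolding dz_def using dW_z z by (blast intro: DERIV_imp_deriv)
  also have "\<dots> = (1 / (2 * pi * \<i>)) * Sfun \<Omega> z (\<lambda>g t. (- 2 * pi * \<i> * of_int (g$a) / t) * X g z \<theta> t / t^2)"
  proof (rule variation_formula_collapse[OF skew])
    show "abs_double \<omega> \<Omega> z (\<lambda>g. X g z \<theta>) (\<lambda>g. dzX a X g z \<theta>)"
      and "abs_double \<omega> \<Omega> z (\<lambda>g. dzX a X g z \<theta>) (\<lambda>g. X g z \<theta>)"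
      using abs_double_XY[OF z, where Y="dzX a X" and a=a] abs_double_YX[OF z, where Y="dzX a X" and a=a]
      by simp_all
    show "ray_summable z (\<lambda>g. of_rat (\<Omega> g)) (\<lambda>g t. dzX a X g z \<theta> t / t^2)"
      by (rule ray_summable_Omega[OF abs_single_sq[OF z, where Y="dzX a X" and a=a]]) simp
    show "ray_summable z (\<lambda>g. of_rat (\<Omega> g)) (\<lambda>g t. (- 2 * pi * \<i> * of_int (g$a) / t) * X g z \<theta> t / t^2)"
      unfolding \<kappa>X
      by (rule ray_summable_cmult[OF ray_summable_Omega_charge_integrand[OF abs_single_cube[OF z, where Y=X]]]) simp
  qed (use dzX_eq adm_ray_point z in blast)
  also have "\<dots> = - Sfun \<Omega> z (\<lambda>g t. of_int (g$a) * X g z \<theta> t / t^3)"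
    unfolding \<kappa>X Sfun_eq_ray_sum ray_sum_cmult by simp
  finally show ?thesis .
qed

lemma dth_dth_W:
  assumes z: "z \<in> U"
  shows "dth a (dth d W) z \<theta> = Sfun \<Omega> z (\<lambda>g t. of_int (g$d) * dthX a X g z \<theta> t / t^2)"
proof -
  have "((\<lambda>w. dth d W z (vupd \<theta> a w)) has_field_derivative
      Sfun \<Omega> z (\<lambda>g t. of_int (g$d) * dthX a X g z \<theta> t / t^2)) (at (\<theta>$a))"
    unfolding dth_W[OF z] using dS z by blast
  then show ?thesis unfolding dth_def[of a] by (rule DERIV_imp_deriv)
qed

lemma dth_dz_W:
  assumes z: "z \<in> U"
  shows "dth a (dz b W) z \<theta> = - Sfun \<Omega> z (\<lambda>g t. of_int (g$b) * dthX a X g z \<theta> t / t^3)"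
proof -
  have "((\<lambda>w. Sfun \<Omega> z (\<lambda>g t. of_int (g$b) * X g z (vupd \<theta> a w) t / t^3)) has_field_derivative
      Sfun \<Omega> z (\<lambda>g t. of_int (g$b) * dthX a X g z \<theta> t / t^3)) (at (\<theta>$a))"
    using dS z by blast
  then have "((\<lambda>w. dz b W z (vupd \<theta> a w)) has_field_derivative
      - Sfun \<Omega> z (\<lambda>g t. of_int (g$b) * dthX a X g z \<theta> t / t^3)) (at (\<theta>$a))"
    unfolding dz_W[OF z] by (rule DERIV_minus)
  then show ?thesis unfolding dth_def[of a] by (rule DERIV_imp_deriv)
qed

text \<open>Unlike the \<open>\<theta>\<close>-derivatives, here the formula for \<open>dth b W\<close> is only available
  on \<open>U\<close>, so the derivative is transferred from the open neighbourhood \<open>vupd z a -` U\<close>.\<close>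
lemma dz_dth_W:
  assumes z: "z \<in> U"
  shows "dz a (dth b W) z \<theta> = Sfun \<Omega> z (\<lambda>g t. of_int (g$b) * dzX a X g z \<theta> t / t^2)"
proof -
  have "((\<lambda>w. Sfun \<Omega> (vupd z a w) (\<lambda>g t. of_int (g$b) * X g (vupd z a w) \<theta> t / t^2)) has_field_derivative
      Sfun \<Omega> z (\<lambda>g t. of_int (g$b) * dzX a X g z \<theta> t / t^2)) (at (z$a))"
    using dS z by blast
  then have "((\<lambda>w. dth b W (vupd z a w) \<theta>) has_field_derivative
      Sfun \<Omega> z (\<lambda>g t. of_int (g$b) * dzX a X g z \<theta> t / t^2)) (at (z$a))"
  proof (rule has_field_derivative_transform_within_open)
    show "open (vupd z a -` U)" by (rule open_vimage[OF U_open continuous_on_vupd])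
    show "z$a \<in> vupd z a -` U" using z by (simp add: vupd_self)
  qed (simp add: dth_W)
  then show ?thesis unfolding dz_def[of a] by (rule DERIV_imp_deriv)
qed

definition lax_coeff :: "'m \<Rightarrow> complex^'m \<Rightarrow> complex^'m \<Rightarrow> 'm \<Rightarrow> complex" where
  "lax_coeff a z \<theta> c = (\<Sum>b\<in>UNIV. of_int (\<omega> b c) * dth a (dth b W) z \<theta>)"

definition lax_defect :: "'m \<Rightarrow> complex^'m \<Rightarrow> complex^'m \<Rightarrow> int^'m \<Rightarrow> complex \<Rightarrow> complex" where
  "lax_defect a z \<theta> h s = dzX a X h z \<theta> s + dthX a X h z \<theta> s / s
     - 1 / (2 * pi)^2 * (\<Sum>c\<in>UNIV. lax_coeff a z \<theta> c * dthX c X h z \<theta> s)"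

lemma sum_lax_coeff:
  "(\<Sum>b\<in>UNIV. \<Sum>c\<in>UNIV. of_int (\<omega> b c) * dth a (dth b W) z \<theta> * D c) = (\<Sum>c\<in>UNIV. lax_coeff a z \<theta> c * D c)"
  unfolding lax_coeff_def sum_distrib_right by (rule sum.swap)

lemma sum_lax_coeff_charge:
  "(\<Sum>c\<in>UNIV. \<Sum>d\<in>UNIV. of_int (g$c) * of_int (\<omega> c d) * dth a (dth d W) z \<theta>)
     = - (\<Sum>c\<in>UNIV. lax_coeff a z \<theta> c * of_int (g$c))"
proof -
  have skew_c: "(of_int (\<omega> d c) :: complex) = - of_int (\<omega> c d)" for c d
  proof -
    have "\<omega> d c = - \<omega> c d" using skew by blast
    then show ?thesis by simp
  qed
  have "(\<Sum>c\<in>UNIV. lax_coeff a z \<theta> c * of_int (g$c))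
      = (\<Sum>c\<in>UNIV. \<Sum>d\<in>UNIV. - (of_int (g$c) * of_int (\<omega> c d) * dth a (dth d W) z \<theta>))"
    unfolding lax_coeff_def sum_distrib_right by (intro sum.cong refl) (subst skew_c, simp add: mult_ac)
  then show ?thesis by (simp add: sum_negf)
qed

lemma lax_defect_eq:
  "dzX a X g z \<theta> t + (1 / t) * dthX a X g z \<theta> t
     - 1 / (2 * pi)^2 * (\<Sum>b\<in>UNIV. \<Sum>c\<in>UNIV. of_int (\<omega> b c) * dth a (dth b W) z \<theta> * dthX c X g z \<theta> t)
   = lax_defect a z \<theta> g t"
  unfolding lax_defect_def sum_lax_coeff by simp

lemma lax_defect_combination:
  "lax_defect a z \<theta> = (\<lambda>h s. (dzX a X h z \<theta> s + dthX a X h z \<theta> s / s)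
     + (- (1 / (2 * pi)^2)) * (\<Sum>c\<in>UNIV. lax_coeff a z \<theta> c * dthX c X h z \<theta> s))"
  by (simp add: fun_eq_iff lax_defect_def)

context
  fixes a :: 'm and z \<theta> :: "complex^'m" and g :: "int^'m" and t :: complex
  assumes z: "z \<in> U" and adm: "adm \<omega> \<Omega> z g t"
begin

lemma abs_lin_dzX: "abs_lin \<omega> \<Omega> z g t (\<lambda>h. dzX a X h z \<theta>)"
  using abs_lin_Y[OF z _ adm, where Y="dzX a X" and a=a] by simp

lemma abs_lin_dthX: "abs_lin \<omega> \<Omega> z g t (\<lambda>h. dthX c X h z \<theta>)"
  using abs_lin_Y[OF z _ adm, where Y="dthX c X" and a=c] by simp

lemma abs_lin_dthX_div: "abs_lin \<omega> \<Omega> z g t (\<lambda>h s. dthX a X h z \<theta> s / s)"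
  using abs_lin_Y_div[OF z _ adm, where Y="dthX a X" and a=a] by simp

lemma abs_lin_lax_defect_sum:
  "abs_lin \<omega> \<Omega> z g t (\<lambda>h s. \<Sum>c\<in>UNIV. lax_coeff a z \<theta> c * dthX c X h z \<theta> s)"
  by (intro abs_lin_sum abs_lin_cmult abs_lin_dthX finite)

lemma abs_lin_lax_defect: "abs_lin \<omega> \<Omega> z g t (lax_defect a z \<theta>)"
  unfolding lax_defect_combination
  by (intro abs_lin_add abs_lin_cmult abs_lin_dzX abs_lin_dthX_div abs_lin_lax_defect_sum)

lemma LinOp_lax_defect:
  "LinOp \<omega> \<Omega> z (lax_defect a z \<theta>) g t =
     LinOp \<omega> \<Omega> z (\<lambda>h. dzX a X h z \<theta>) g t + LinOp \<omega> \<Omega> z (\<lambda>h s. dthX a X h z \<theta> s / s) g t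
     - 1 / (2 * pi)^2 * (\<Sum>c\<in>UNIV. lax_coeff a z \<theta> c * LinOp \<omega> \<Omega> z (\<lambda>h. dthX c X h z \<theta>) g t)"
proof -
  have "LinOp \<omega> \<Omega> z (\<lambda>h s. \<Sum>c\<in>UNIV. lax_coeff a z \<theta> c * dthX c X h z \<theta> s) g t
      = (\<Sum>c\<in>UNIV. lax_coeff a z \<theta> c * LinOp \<omega> \<Omega> z (\<lambda>h. dthX c X h z \<theta>) g t)"
    by (subst LinOp_sum) (simp_all add: abs_lin_cmult abs_lin_dthX LinOp_cmult)
  then show ?thesis
    unfolding lax_defect_combination
      LinOp_add[OF abs_lin_add[OF abs_lin_dzX abs_lin_dthX_div] abs_lin_cmult[OF abs_lin_lax_defect_sum]]
      LinOp_add[OF abs_lin_dzX abs_lin_dthX_div] LinOp_cmult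
    by (simp only: of_real_minus mult_minus_left diff_conv_add_uminus)
qed

text \<open>After inserting the linearised TBA equations of \<open>\<partial>X/\<partial>z\<^sup>a\<close> and \<open>\<partial>X/\<partial>\<theta>\<close>, the
  inhomogeneities \<open>\<mp>2\<pi>i q\<^sub>a/t\<close> cancel, and the remainder of the partial fraction cancels
  the \<open>\<omega>\<close>-term by skew-symmetry.\<close>
lemma lax_defect_linearised: "lax_defect a z \<theta> g t = X g z \<theta> t * LinOp \<omega> \<Omega> z (lax_defect a z \<theta>) g t"
proof -
  have t0: "t \<noteq> 0" using adm unfolding adm_def by blast
  have Z_nz_z: "\<forall>h\<in>Gstar. \<Omega> h \<noteq> 0 \<longrightarrow> Zc z h \<noteq> 0" using Z_nz z by blast
  have "(1 / t) * LinOp \<omega> \<Omega> z (\<lambda>h. dthX a X h z \<theta>) g t = LinOp \<omega> \<Omega> z (\<lambda>h s. dthX a X h z \<theta> s / s) g t +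
      (1 / (2 * pi * \<i>)) * (\<Sum>c\<in>UNIV. \<Sum>d\<in>UNIV. of_int (g$c) * of_int (\<omega> c d) *
        Sfun \<Omega> z (\<lambda>h s. of_int (h$d) * dthX a X h z \<theta> s / s^2))"
    by (rule LinOp_partial_fraction[OF Z_nz_z adm abs_lin_dthX_div])
       (rule abs_single_sq[OF z, where Y="dthX a X" and a=a], simp)
  also have "\<dots> = LinOp \<omega> \<Omega> z (\<lambda>h s. dthX a X h z \<theta> s / s) g t -
      (1 / (2 * pi * \<i>)) * (\<Sum>c\<in>UNIV. lax_coeff a z \<theta> c * of_int (g$c))"
    unfolding dth_dth_W[OF z, symmetric] sum_lax_coeff_charge by simp
  finally have partial_fraction: "(1 / t) * LinOp \<omega> \<Omega> z (\<lambda>h. dthX a X h z \<theta>) g t = \<dots>" .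
  have coeff_sum: "(\<Sum>c\<in>UNIV. lax_coeff a z \<theta> c * dthX c X g z \<theta> t)
      = X g z \<theta> t * (2 * pi * \<i>) * (\<Sum>c\<in>UNIV. lax_coeff a z \<theta> c * of_int (g$c))
        + X g z \<theta> t * (\<Sum>c\<in>UNIV. lax_coeff a z \<theta> c * LinOp \<omega> \<Omega> z (\<lambda>h. dthX c X h z \<theta>) g t)"
    unfolding dthX_eq[OF z adm] by (simp add: sum_distrib_left distrib_left sum.distrib mult_ac)
  show ?thesis
    unfolding lax_defect_def LinOp_lax_defect
    by (rule lax_field_identity[OF t0 dzX_eq[OF z adm] dthX_eq[OF z adm] partial_fraction coeff_sum])
qed

end

lemma lax_equation:
  assumes z: "z \<in> U" and adm: "adm \<omega> \<Omega> z g t"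
  shows "dzX a X g z \<theta> t + (1 / t) * dthX a X g z \<theta> t
     - 1 / (2 * pi)^2 * (\<Sum>b\<in>UNIV. \<Sum>c\<in>UNIV. of_int (\<omega> b c) * dth a (dth b W) z \<theta> * dthX c X g z \<theta> t) = 0"
proof -
  have "(\<forall>g t. adm \<omega> \<Omega> z g t \<longrightarrow> abs_lin \<omega> \<Omega> z g t (lax_defect a z \<theta>) \<and>
      lax_defect a z \<theta> g t = X g z \<theta> t * LinOp \<omega> \<Omega> z (lax_defect a z \<theta>) g t)
    \<longrightarrow> (\<forall>g t. adm \<omega> \<Omega> z g t \<longrightarrow> lax_defect a z \<theta> g t = 0)"
    using inversion z by blast
  then have "\<forall>g t. adm \<omega> \<Omega> z g t \<longrightarrow> lax_defect a z \<theta> g t = 0"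
    using abs_lin_lax_defect[OF z] lax_defect_linearised[OF z] by blast
  then show ?thesis unfolding lax_defect_eq using adm by blast
qed

lemma dzX_via_lax:
  assumes "z \<in> U" "adm \<omega> \<Omega> z g t"
  shows "dzX a X g z \<theta> t = - ((1 / t) * dthX a X g z \<theta> t)
    + 1 / (2 * pi)^2 * (\<Sum>c\<in>UNIV. lax_coeff a z \<theta> c * dthX c X g z \<theta> t)"
  using lax_equation[OF assms, of a \<theta>] unfolding sum_lax_coeff by (simp add: algebra_simps)

lemma dz_dth_W_via_lax:
  assumes z: "z \<in> U"
  shows "dz a (dth b W) z \<theta> = - Sfun \<Omega> z (\<lambda>g t. of_int (g$b) * dthX a X g z \<theta> t / t^3)
     + 1 / (2 * pi)^2 * (\<Sum>c\<in>UNIV. lax_coeff a z \<theta> c * Sfun \<Omega> z (\<lambda>g t. of_int (g$b) * dthX c X g z \<theta> t / t^2))"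
proof -
  define k :: complex where "k = 1 / (2 * pi)^2"
  define \<beta> where "\<beta> = lax_coeff a z \<theta>"
  have A: "ray_summable z (\<lambda>g. of_rat (\<Omega> g)) (\<lambda>g t. (-1) * (of_int (g$b) * dthX a X g z \<theta> t / t^3))"
    using ray_summable_cmult[OF ray_summable_Omega_charge_integrand[OF abs_single_cube[OF z, where Y="dthX a X" and a=a]],
        where c="-1"]
    by simp
  have C: "ray_summable z (\<lambda>g. of_rat (\<Omega> g)) (\<lambda>g t. \<beta> c * (of_int (g$b) * dthX c X g z \<theta> t / t^2))" for c
    using ray_summable_cmult[OF ray_summable_Omega_charge_integrand[OF abs_single_sq[OF z, where Y="dthX c X" and a=c]],
        where c="\<beta> c"]
    by simp
  have "dz a (dth b W) z \<theta> = ray_sum z (\<lambda>g. of_rat (\<Omega> g)) (\<lambda>g t. (-1) * (of_int (g$b) * dthX a X g z \<theta> t / t^3)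
      + k * (\<Sum>c\<in>UNIV. \<beta> c * (of_int (g$b) * dthX c X g z \<theta> t / t^2)))"
    unfolding dz_dth_W[OF z] Sfun_eq_ray_sum
  proof (rule ray_sum_cong)
    fix g :: "int^'m" and u :: real
    assume g: "g \<in> Gstar" "of_rat (\<Omega> g) \<noteq> (0::complex)" "u > 0"
    define t where "t = \<i> * Zc z g * of_real u"
    have adm: "adm \<omega> \<Omega> z g t" unfolding t_def using adm_ray_point[OF z g(1) _ g(3)] g(2) by simp
    then have t0: "t \<noteq> 0" unfolding adm_def by blast
    have sum: "(\<Sum>c\<in>UNIV. \<beta> c * (of_int (g$b) * dthX c X g z \<theta> t / t^2))
        = of_int (g$b) * (\<Sum>c\<in>UNIV. \<beta> c * dthX c X g z \<theta> t) / t^2"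
      by (simp add: sum_distrib_left sum_divide_distrib mult_ac)
    have field_identity: "q * (- ((1 / t) * A) + k * B) / t^2 = (-1) * (q * A / t^3) + k * (q * B / t^2)"
      for q A B using t0 by (simp add: field_simps power2_eq_square power3_eq_cube)
    show "of_int (g$b) * dzX a X g z \<theta> t / t^2 = (-1) * (of_int (g$b) * dthX a X g z \<theta> t / t^3)
      + k * (\<Sum>c\<in>UNIV. \<beta> c * (of_int (g$b) * dthX c X g z \<theta> t / t^2))"
      unfolding sum dzX_via_lax[OF z adm] k_def[symmetric] \<beta>_def[symmetric] by (rule field_identity)
  qed
  also have "\<dots> = - Sfun \<Omega> z (\<lambda>g t. of_int (g$b) * dthX a X g z \<theta> t / t^3)
      + k * (\<Sum>c\<in>UNIV. \<beta> c * Sfun \<Omega> z (\<lambda>g t. of_int (g$b) * dthX c X g z \<theta> t / t^2))"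
    unfolding ray_sum_add[OF A ray_summable_cmult[OF ray_summable_sum[OF finite C]]]
      ray_sum_cmult ray_sum_sum[OF finite C] Sfun_eq_ray_sum by simp
  finally show ?thesis unfolding k_def \<beta>_def .
qed

lemma heavenly_equation:
  assumes z: "z \<in> U"
  shows "dz a (dth b W) z \<theta> - dz b (dth a W) z \<theta> =
    1 / (2 * pi)^2 * (\<Sum>c\<in>UNIV. \<Sum>d\<in>UNIV. of_int (\<omega> c d) * dth a (dth c W) z \<theta> * dth b (dth d W) z \<theta>)"
proof -
  have cube: "Sfun \<Omega> z (\<lambda>g t. of_int (g$b) * dthX a X g z \<theta> t / t^3) = - dz b (dth a W) z \<theta>"
    using dth_dz_W[OF z, of a b \<theta>] mixed z by simp
  have square: "Sfun \<Omega> z (\<lambda>g t. of_int (g$b) * dthX c X g z \<theta> t / t^2) = dth b (dth c W) z \<theta>" for c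
    using dth_dth_W[OF z, of c b \<theta>] mixed z by simp
  have "(\<Sum>c\<in>UNIV. lax_coeff a z \<theta> c * dth b (dth c W) z \<theta>)
      = (\<Sum>c\<in>UNIV. \<Sum>d\<in>UNIV. of_int (\<omega> c d) * dth a (dth c W) z \<theta> * dth b (dth d W) z \<theta>)"
    unfolding lax_coeff_def sum_distrib_right by (rule sum.swap[symmetric])
  then show ?thesis using dz_dth_W_via_lax[OF z, of a b \<theta>] unfolding cube square by simp
qed

end

theorem mainTheorem2:
  fixes \<omega> :: "'m::finite \<Rightarrow> 'm \<Rightarrow> int"
    and \<sigma> :: "int^'m \<Rightarrow> complex"
    and \<Omega> :: "int^'m \<Rightarrow> rat"
    and U :: "(complex^'m) set"
    and X :: "int^'m \<Rightarrow> complex^'m \<Rightarrow> complex^'m \<Rightarrow> complex \<Rightarrow> complex"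
    and W :: "complex^'m \<Rightarrow> complex^'m \<Rightarrow> complex"
  assumes skew: "\<forall>a b. \<omega> a b = - \<omega> b a"
    and invertible: "det (\<chi> a. \<chi> b. real_of_int (\<omega> a b)) \<noteq> 0"
    and sigma_nz: "\<forall>g. \<sigma> g \<noteq> 0"
    and sigma_qr: "\<forall>g h. \<sigma> g * \<sigma> h = (-1) powi (pairing \<omega> g h) * \<sigma> (g + h)"
    and U_open: "open U"
    and Z_nz: "\<forall>z\<in>U. \<forall>g\<in>Gstar. \<Omega> g \<noteq> 0 \<longrightarrow> Zc z g \<noteq> 0"
    and TBA: "\<forall>z\<in>U. \<forall>\<theta> g t. adm \<omega> \<Omega> z g t \<longrightarrow>
               X g z \<theta> t = Xsf \<sigma> z \<theta> g t * exp (LinOp \<omega> \<Omega> z (\<lambda>h. X h z \<theta>) g t)"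
    \<comment> \<open>standing assumption: genericity (integrands of W on l_gamma are governed by the TBA system)\<close>
    and generic: "\<forall>z\<in>U. \<forall>g\<in>Gstar. \<Omega> g \<noteq> 0 \<longrightarrow> (\<forall>t. onray (Zc z g) t \<longrightarrow> adm \<omega> \<Omega> z g t)"
    \<comment> \<open>standing assumption: differentiation of the TBA system under sums and integrals\<close>
    and dX_theta: "\<forall>z\<in>U. \<forall>\<theta> g t a. adm \<omega> \<Omega> z g t \<longrightarrow>
               ((\<lambda>w. X g z (vupd \<theta> a w) t) has_field_derivative
                  X g z \<theta> t * (2 * pi * \<i> * of_int (g$a) + LinOp \<omega> \<Omega> z (\<lambda>h. dthX a X h z \<theta>) g t))
               (at (\<theta>$a))"
    and dX_z: "\<forall>z\<in>U. \<forall>\<theta> g t a. adm \<omega> \<Omega> z g t \<longrightarrow>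
               ((\<lambda>w. X g (vupd z a w) \<theta> t) has_field_derivative
                  X g z \<theta> t * (- 2 * pi * \<i> * of_int (g$a) / t + LinOp \<omega> \<Omega> z (\<lambda>h. dzX a X h z \<theta>) g t))
               (at (z$a))"
    \<comment> \<open>standing assumption: differentiation of W and of the derived sums under sums and integrals\<close>
    and dW_theta: "\<forall>z\<in>U. \<forall>\<theta> a.
               ((\<lambda>w. W z (vupd \<theta> a w)) has_field_derivative
                  (1 / (2 * pi * \<i>)) * Sfun \<Omega> z (\<lambda>g t. dthX a X g z \<theta> t / t^2)
                  - (1 / (2 * (2 * pi * \<i>)^2)) *
                    (Dfun \<omega> \<Omega> z (\<lambda>g. dthX a X g z \<theta>) (\<lambda>g. X g z \<theta>)
                     + Dfun \<omega> \<Omega> z (\<lambda>g. X g z \<theta>) (\<lambda>g. dthX a X g z \<theta>)))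
               (at (\<theta>$a))"
    and dW_z: "\<forall>z\<in>U. \<forall>\<theta> a.
               ((\<lambda>w. W (vupd z a w) \<theta>) has_field_derivative
                  (1 / (2 * pi * \<i>)) * Sfun \<Omega> z (\<lambda>g t. dzX a X g z \<theta> t / t^2)
                  - (1 / (2 * (2 * pi * \<i>)^2)) *
                    (Dfun \<omega> \<Omega> z (\<lambda>g. dzX a X g z \<theta>) (\<lambda>g. X g z \<theta>)
                     + Dfun \<omega> \<Omega> z (\<lambda>g. X g z \<theta>) (\<lambda>g. dzX a X g z \<theta>)))
               (at (z$a))"
    and dS: "\<forall>z\<in>U. \<forall>\<theta> a b.
               ((\<lambda>w. Sfun \<Omega> z (\<lambda>g t. of_int (g$a) * X g z (vupd \<theta> b w) t / t^2)) has_field_derivative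
                  Sfun \<Omega> z (\<lambda>g t. of_int (g$a) * dthX b X g z \<theta> t / t^2)) (at (\<theta>$b)) \<and>
               ((\<lambda>w. Sfun \<Omega> (vupd z b w) (\<lambda>g t. of_int (g$a) * X g (vupd z b w) \<theta> t / t^2)) has_field_derivative
                  Sfun \<Omega> z (\<lambda>g t. of_int (g$a) * dzX b X g z \<theta> t / t^2)) (at (z$b)) \<and>
               ((\<lambda>w. Sfun \<Omega> z (\<lambda>g t. of_int (g$a) * X g z (vupd \<theta> b w) t / t^3)) has_field_derivative
                  Sfun \<Omega> z (\<lambda>g t. of_int (g$a) * dthX b X g z \<theta> t / t^3)) (at (\<theta>$b))"
    \<comment> \<open>standing assumption: commutation of partial derivatives of W\<close>
    and mixed: "\<forall>z\<in>U. \<forall>\<theta> a b. dth a (dth b W) z \<theta> = dth b (dth a W) z \<theta> \<and>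
                                 dz a (dth b W) z \<theta> = dth b (dz a W) z \<theta>"
    \<comment> \<open>standing assumption: absolute convergence of all sums and integrals\<close>
    and abs_conv: "\<forall>z\<in>U. \<forall>\<theta> a. \<forall>Y\<in>{X, dthX a X, dzX a X}.
               abs_single \<Omega> z (\<lambda>g t. Y g z \<theta> t / t^2) \<and>
               abs_single \<Omega> z (\<lambda>g t. Y g z \<theta> t / t^3) \<and>
               abs_double \<omega> \<Omega> z (\<lambda>g. X g z \<theta>) (\<lambda>g. Y g z \<theta>) \<and>
               abs_double \<omega> \<Omega> z (\<lambda>g. Y g z \<theta>) (\<lambda>g. X g z \<theta>) \<and>
               (\<forall>g t. adm \<omega> \<Omega> z g t \<longrightarrow>
                  abs_lin \<omega> \<Omega> z g t (\<lambda>h. Y h z \<theta>) \<and>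
                  abs_lin \<omega> \<Omega> z g t (\<lambda>h t'. Y h z \<theta> t' / t'))"
    \<comment> \<open>standing assumption: the linearized integral equation is inverted by its iterated series,
        so its homogeneous version has only the trivial solution\<close>
    and inversion: "\<forall>z\<in>U. \<forall>\<theta>. \<forall>Y. (\<forall>g t. adm \<omega> \<Omega> z g t \<longrightarrow>
                  abs_lin \<omega> \<Omega> z g t Y \<and> Y g t = X g z \<theta> t * LinOp \<omega> \<Omega> z Y g t)
               \<longrightarrow> (\<forall>g t. adm \<omega> \<Omega> z g t \<longrightarrow> Y g t = 0)"
    and W_def: "W = Wfun \<omega> \<Omega> X"
  shows "(\<forall>z\<in>U. \<forall>\<theta> a b.
            dz a (dth b W) z \<theta> - dz b (dth a W) z \<theta> =
            1 / (2 * pi)^2 * (\<Sum>c\<in>UNIV. \<Sum>d\<in>UNIV.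
               of_int (\<omega> c d) * dth a (dth c W) z \<theta> * dth b (dth d W) z \<theta>))
       \<and> (\<forall>z\<in>U. \<forall>\<theta> g t a. adm \<omega> \<Omega> z g t \<longrightarrow>
            dzX a X g z \<theta> t + (1 / t) * dthX a X g z \<theta> t
            - 1 / (2 * pi)^2 * (\<Sum>b\<in>UNIV. \<Sum>c\<in>UNIV.
               of_int (\<omega> b c) * dth a (dth b W) z \<theta> * dthX c X g z \<theta> t) = 0)"
proof -
  \<comment> \<open>The TBA system, the quadratic refinement, the invertibility of \<open>\<omega>\<close> and the formula
      for \<open>W\<close> enter only through the differentiation hypotheses.\<close>
  interpret tba_variations \<omega> \<Omega> U X W
    using skew U_open Z_nz generic dX_theta dX_z dW_theta dW_z dS mixed abs_conv inversion
    by (rule tba_variations.intro)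
  show ?thesis using heavenly_equation lax_equation by blast
qed

end
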